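(* Let $\mathrm L$ be a spline-admissible operator with null space $\mathcal N_{\mathrm L}$ and pseudoinverse $\mathrm L^\dagger$, and let $p\in[1,\infty]$. Then the native space $\mathcal M_{\mathrm L}(\mathbb T^d)=\{f\in\mathcal S'(\mathbb T^d):\mathrm Lf\in\mathcal M(\mathbb T^d)\}$ is the direct sum $\mathcal M_{\mathrm L}(\mathbb T^d)=\mathrm L^\dagger(\mathcal M(\mathbb T^d))\oplus\mathcal N_{\mathrm L}$, where $\mathrm L^\dagger(\mathcal M(\mathbb T^d))=\{\mathrm L^\dagger w:w\in\mathcal M(\mathbb T^d)\}$. It is a Banach space for the norm $\|f\|_{\mathcal M_{\mathrm L},p}=\big(\|\mathrm Lf\|_{\mathcal M}^p+\|\mathrm{Proj}_{\mathcal N_{\mathrm L}}f\|_2^p\big)^{1/p}$ (maximum for $p=\infty$), and these norms are equivalent for all $p\in[1,\infty]$. Moreover $\mathcal S(\mathbb T^d)\subseteq\mathcal M_{\mathrm L}(\mathbb T^d)\subseteq\mathcal S'(\mathbb T^d)$ with continuous embeddings, $\mathrm L$ is continuous from $\mathcal M_{\mathrm L}(\mathbb T^d)$ to $\mathcal M(\mathbb T^d)$, and every periodic $\mathrm L$-spline belongs to $\mathcal M_{\mathrm L}(\mathbb T^d)$.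
   Context: Let $d\ge1$, $\mathbb T^d=\mathbb R^d/2\pi\mathbb Z^d$, $\mathcal S(\mathbb T^d)$ the smooth periodic functions (Fréchet topology) and $\mathcal S'(\mathbb T^d)$ its dual; for $f\in L_1$, $\langle f,\varphi\rangle=(2\pi)^{-d}\int_{\mathbb T^d}f\varphi$. With $e_{\bm k}(\bm x)=e^{\mathrm i\langle\bm x,\bm k\rangle}$, each $f\in\mathcal S'$ expands uniquely as $f=\sum\widehat f[\bm k]e_{\bm k}$ with slowly growing coefficients. Operators in $\mathcal L_{\mathrm{SI}}(\mathcal S'(\mathbb T^d))$ (linear, shift-invariant, continuous on $\mathcal S'$) act by $\mathrm Lf=\sum\widehat L[\bm k]\widehat f[\bm k]e_{\bm k}$ with slowly growing $\widehat L$. $\mathrm L$ is spline-admissible if its null space $\mathcal N_{\mathrm L}$ is finite-dimensional and it admits a pseudoinverse $\mathrm L^\dagger\in\mathcal L_{\mathrm{SI}}$ ($\mathrm L\mathrm L^\dagger\mathrm L=\mathrm L$, $\mathrm L^\dagger\mathrm L\mathrm L^\dagger=\mathrm L^\dagger$, $\mathrm L\mathrm L^\dagger$ and $\mathrm L^\dagger\mathrm L$ self-adjoint); then $N_{\mathrm L}=\{\bm k:\widehat L[\bm k]=0\}=\{\bm k_1,\dots,\bm k_{N_0}\}$ is finite, $\mathcal N_{\mathrm L}=\mathrm{Span}\{e_{\bm k_n}\}$, $\mathrm L^\dagger$ has Fourier sequence $1/\widehat L[\bm k]$ off $N_{\mathrm L}$ and $0$ on it, and $\mathrm{Proj}_{\mathcal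 N_{\mathrm L}}f:=\sum_{n=1}^{N_0}\widehat f[\bm k_n]e_{\bm k_n}$. $\|\cdot\|_2$ is the $L_2$ norm for the normalized measure, so $\|p\|_2^2=\sum|\widehat p[\bm k]|^2$. $\mathcal C(\mathbb T^d)$ is the space of continuous periodic functions with $\|\cdot\|_\infty$; $\mathcal M(\mathbb T^d)=\mathcal C(\mathbb T^d)'$ is the space of periodic finite Radon measures with total variation norm, identified with $\{w\in\mathcal S'(\mathbb T^d):\|w\|_{\mathcal M}:=\sup_{\varphi\in\mathcal S,\|\varphi\|_\infty=1}\langle w,\varphi\rangle<\infty\}$. The Dirac comb $Ш$ is given by $\langle Ш,\varphi\rangle=\varphi(\bm 0)$. A periodic $\mathrm L$-spline is an $f\in\mathcal S'(\mathbb T^d)$ with $\mathrm Lf=\sum_{k=1}^Ka_kШ(\cdot-\bm x_k)$ for some $K\ge0$, distinct $\bm x_k\in\mathbb T^d$ and $a_k\in\mathbb R\setminus\{0\}$. *)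

theory Defs
  imports "HOL-Analysis.Analysis"
begin

text \<open>Periodic distributions on the torus T^d are represented by their Fourier
  coefficient sequences indexed by Z^d (here: functions 'd => int for a finite
  index type 'd with d = CARD('d)).  Real-valued objects correspond to
  Hermitian-symmetric coefficient sequences.\<close>

type_synonym 'd fseq = "('d \<Rightarrow> int) \<Rightarrow> complex"

definition kabs :: "('d::finite \<Rightarrow> int) \<Rightarrow> real" where
  "kabs k = (\<Sum>i\<in>UNIV. real_of_int \<bar>k i\<bar>)"

definition kneg :: "('d::finite \<Rightarrow> int) \<Rightarrow> ('d \<Rightarrow> int)" where
  "kneg k = (\<lambda>i. - k i)"

definition hermitian :: "'d::finite fseq \<Rightarrow> bool" where
  "hermitian c \<longleftrightarrow> (\<forall>k. c (kneg k) = cnj (c k))"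

definition slowly_growing :: "'d::finite fseq \<Rightarrow> bool" where
  "slowly_growing c \<longleftrightarrow> (\<exists>C N. \<forall>k. cmod (c k) \<le> C * (1 + kabs k) ^ N)"

definition rapidly_decaying :: "'d::finite fseq \<Rightarrow> bool" where
  "rapidly_decaying c \<longleftrightarrow> (\<forall>N. \<exists>C. \<forall>k. cmod (c k) * (1 + kabs k) ^ N \<le> C)"

text \<open>S(T^d): smooth real periodic functions; S'(T^d): real periodic distributions.\<close>
definition Sspace :: "'d::finite fseq set" where
  "Sspace = {c. rapidly_decaying c \<and> hermitian c}"

definition Sdual :: "'d::finite fseq set" where
  "Sdual = {c. slowly_growing c \<and> hermitian c}"

definition Sseminorm :: "nat \<Rightarrow> 'd::finite fseq \<Rightarrow> real" where
  "Sseminorm N c = (SUP k. cmod (c k) * (1 + kabs k) ^ N)"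

definition inner_xk :: "('d::finite \<Rightarrow> real) \<Rightarrow> ('d \<Rightarrow> int) \<Rightarrow> real" where
  "inner_xk x k = (\<Sum>i\<in>UNIV. x i * real_of_int (k i))"

definition eval_fun :: "'d::finite fseq \<Rightarrow> ('d \<Rightarrow> real) \<Rightarrow> complex" where
  "eval_fun c x = infsum (\<lambda>k. c k * cis (inner_xk x k)) UNIV"

definition sup_norm :: "'d::finite fseq \<Rightarrow> real" where
  "sup_norm c = (SUP x. cmod (eval_fun c x))"

text \<open>Duality pairing <f,phi> = (2pi)^{-d} int f phi = sum_k f^[k] phi^[-k].\<close>
definition pairing :: "'d::finite fseq \<Rightarrow> 'd fseq \<Rightarrow> real" where
  "pairing f \<phi> = Re (infsum (\<lambda>k. f k * \<phi> (kneg k)) UNIV)"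

text \<open>M(T^d) as the set of distributions with finite total-variation norm.\<close>
definition Mset :: "'d::finite fseq set" where
  "Mset = {w \<in> Sdual. bdd_above {pairing w \<phi> |\<phi>. \<phi> \<in> Sspace \<and> sup_norm \<phi> = 1}}"

definition Mnorm :: "'d::finite fseq \<Rightarrow> real" where
  "Mnorm w = Sup {pairing w \<phi> |\<phi>. \<phi> \<in> Sspace \<and> sup_norm \<phi> = 1}"

text \<open>LSI operators are given by their Fourier multipliers.\<close>
definition LSI :: "'d::finite fseq set" where
  "LSI = {m. slowly_growing m \<and> hermitian m}"

definition apply_op :: "'d::finite fseq \<Rightarrow> 'd fseq \<Rightarrow> 'd fseq" where
  "apply_op m f = (\<lambda>k. m k * f k)"

text \<open>Adjoint (transpose w.r.t. the pairing) of a multiplier operator.\<close>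
definition adj_op :: "'d::finite fseq \<Rightarrow> 'd fseq" where
  "adj_op m = (\<lambda>k. m (kneg k))"

definition comp_op :: "'d::finite fseq \<Rightarrow> 'd fseq \<Rightarrow> 'd fseq" where
  "comp_op m1 m2 = (\<lambda>k. m1 k * m2 k)"

definition null_space :: "'d::finite fseq \<Rightarrow> 'd fseq set" where
  "null_space L = {f \<in> Sdual. apply_op L f = (\<lambda>k. 0)}"

definition is_pseudoinverse :: "'d::finite fseq \<Rightarrow> 'd fseq \<Rightarrow> bool" where
  "is_pseudoinverse L M \<longleftrightarrow> M \<in> LSI \<and>
     comp_op L (comp_op M L) = L \<and> comp_op M (comp_op L M) = M \<and>
     adj_op (comp_op L M) = comp_op L M \<and> adj_op (comp_op M L) = comp_op M L"

text \<open>Finite dimensionality of the null space is expressed by the finiteness of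
  the zero set of the multiplier (null space = span of the e_k with L^[k]=0).\<close>
definition spline_admissible :: "'d::finite fseq \<Rightarrow> bool" where
  "spline_admissible L \<longleftrightarrow> L \<in> LSI \<and> finite {k. L k = 0} \<and> (\<exists>M. is_pseudoinverse L M)"

definition pinv :: "'d::finite fseq \<Rightarrow> 'd fseq" where
  "pinv L = (\<lambda>k. if L k = 0 then 0 else 1 / L k)"

definition proj_null :: "'d::finite fseq \<Rightarrow> 'd fseq \<Rightarrow> 'd fseq" where
  "proj_null L f = (\<lambda>k. if L k = 0 then f k else 0)"

definition l2norm :: "'d::finite fseq \<Rightarrow> real" where
  "l2norm c = sqrt (infsum (\<lambda>k. (cmod (c k))\<^sup>2) UNIV)"

definition native_space :: "'d::finite fseq \<Rightarrow> 'd fseq set" where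
  "native_space L = {f \<in> Sdual. apply_op L f \<in> Mset}"

definition native_norm :: "'d::finite fseq \<Rightarrow> ereal \<Rightarrow> 'd fseq \<Rightarrow> real" where
  "native_norm L p f =
     (if p = \<infinity> then max (Mnorm (apply_op L f)) (l2norm (proj_null L f))
      else (Mnorm (apply_op L f) powr real_of_ereal p
            + l2norm (proj_null L f) powr real_of_ereal p) powr (1 / real_of_ereal p))"

definition banach_on :: "'d::finite fseq set \<Rightarrow> ('d fseq \<Rightarrow> real) \<Rightarrow> bool" where
  "banach_on V nrm \<longleftrightarrow>
     (\<lambda>k. 0) \<in> V \<and>
     (\<forall>f\<in>V. \<forall>g\<in>V. (\<lambda>k. f k + g k) \<in> V) \<and>
     (\<forall>f\<in>V. \<forall>c::real. (\<lambda>k. of_real c * f k) \<in> V) \<and>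
     (\<forall>f\<in>V. 0 \<le> nrm f \<and> (nrm f = 0 \<longleftrightarrow> f = (\<lambda>k. 0))) \<and>
     (\<forall>f\<in>V. \<forall>c::real. nrm (\<lambda>k. of_real c * f k) = \<bar>c\<bar> * nrm f) \<and>
     (\<forall>f\<in>V. \<forall>g\<in>V. nrm (\<lambda>k. f k + g k) \<le> nrm f + nrm g) \<and>
     (\<forall>s. (\<forall>n. s n \<in> V) \<and>
          (\<forall>e>0. \<exists>N. \<forall>m\<ge>N. \<forall>n\<ge>N. nrm (\<lambda>k. s m k - s n k) < e)
          \<longrightarrow> (\<exists>f\<in>V. (\<lambda>n. nrm (\<lambda>k. s n k - f k)) \<longlonglongrightarrow> 0))"

definition dirac_shift :: "('d::finite \<Rightarrow> real) \<Rightarrow> 'd fseq" where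
  "dirac_shift x = (\<lambda>k. cis (- inner_xk x k))"

definition torus_eq :: "('d::finite \<Rightarrow> real) \<Rightarrow> ('d \<Rightarrow> real) \<Rightarrow> bool" where
  "torus_eq x y \<longleftrightarrow> (\<forall>i. \<exists>n::int. x i - y i = 2 * pi * of_int n)"

definition is_periodic_spline :: "'d::finite fseq \<Rightarrow> 'd fseq \<Rightarrow> bool" where
  "is_periodic_spline L f \<longleftrightarrow> f \<in> Sdual \<and>
     (\<exists>K::nat. \<exists>x::nat \<Rightarrow> ('d \<Rightarrow> real). \<exists>a::nat \<Rightarrow> real.
        (\<forall>i<K. \<forall>j<K. i \<noteq> j \<longrightarrow> \<not> torus_eq (x i) (x j)) \<and>
        (\<forall>i<K. a i \<noteq> 0) \<and>
        apply_op L f = (\<lambda>k. \<Sum>i<K. of_real (a i) * dirac_shift (x i) k))"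

end

(*
  As pinv L inverts L off the finite zero set Z
  of L, every f with Lf in M splits as f = pinv L (Lf) + Proj f; conversely pinv L w + n has
  L-image w - Proj w, which is a measure because Proj w is a trigonometric polynomial, and the two
  summands meet only in 0.  Every native norm lies between max (||Lf||_M, ||Proj f||_2) and the sum
  of the two, whence all of them are equivalent; the triangle inequality is Minkowski's inequality
  for pairs.

  The analytic core is |w^[k]| <= ||w||_M, obtained by testing w against the real trigonometric
  monomial 2 Re (c e_-k).  It rests on |phi^[k]| <= ||phi||_inf, proved without integration by
  averaging phi over the grids 2 pi / N Z^d, whose aliasing error vanishes as N grows.  Hence a
  native Cauchy sequence converges coefficientwise, uniformly against the weight 1 + |1 / L^[k]|,
  and the limit is a norm limit because ||L (s_n - s_m)||_M <= e survives m -> infinity when tested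
  against rapidly decaying phi.  The embedding of S, the continuity of the pairing and the spline
  statement follow from weighted l1 estimates and from Dirac combs being measures.
*)

theory Submission
  imports Defs
begin

lemma kneg_kneg [simp]: "kneg (kneg k) = k"
  by (simp add: kneg_def)

lemma kneg_eq_iff [simp]: "kneg a = kneg b \<longleftrightarrow> a = b"
  by (metis kneg_kneg)

lemma kneg_eq_swap: "kneg j = k \<longleftrightarrow> j = kneg k"
  by auto

lemma bij_kneg: "bij kneg"
  by (metis bij_betw_imageI inj_def kneg_eq_iff kneg_kneg surj_def)

lemma kabs_kneg [simp]: "kabs (kneg k) = kabs k"
  by (simp add: kabs_def kneg_def)

lemma kabs_nonneg [simp]: "0 \<le> kabs k"
  by (simp add: kabs_def sum_nonneg)

lemma abs_component_le_kabs: "\<bar>real_of_int (k i)\<bar> \<le> kabs k"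
  unfolding kabs_def using member_le_sum[of i UNIV "\<lambda>i. real_of_int \<bar>k i\<bar>"] by simp

lemma one_le_kabs_power: "1 \<le> (1 + kabs k) ^ N"
  by (simp add: one_le_power)

lemma kabs_power_pos: "0 < (1 + kabs k) ^ N"
  using one_le_kabs_power[of k N] by linarith

lemma kabs_power_mono: "M \<le> N \<Longrightarrow> (1 + kabs k) ^ M \<le> (1 + kabs k) ^ N"
  by (simp add: power_increasing)

definition lattice_weight :: "('d::finite \<Rightarrow> int) \<Rightarrow> real" where
  "lattice_weight k = (\<Prod>i\<in>UNIV. 1 / (1 + real_of_int \<bar>k i\<bar>)^2)"

lemma lattice_weight_pos: "0 < lattice_weight k"
  unfolding lattice_weight_def by (intro prod_pos) (auto intro!: divide_pos_pos)

lemma lattice_weight_nonneg: "0 \<le> lattice_weight k"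
  using lattice_weight_pos less_imp_le by blast

lemma lattice_weight_ge: "1 / (1 + kabs k) ^ (2 * CARD('d)) \<le> lattice_weight (k :: 'd::finite \<Rightarrow> int)"
proof -
  define P where "P = (\<Prod>i\<in>UNIV. 1 + real_of_int \<bar>k i\<bar>)"
  have "1 \<le> P"
    unfolding P_def by (intro prod_ge_1) auto
  have "P \<le> (\<Prod>i\<in>(UNIV::'d set). 1 + kabs k)"
    unfolding P_def by (intro prod_mono) (auto simp: abs_component_le_kabs)
  then have "P^2 \<le> ((1 + kabs k) ^ CARD('d))^2"
    using \<open>1 \<le> P\<close> by (intro power_mono) auto
  moreover have "lattice_weight k = 1 / P^2"
    unfolding lattice_weight_def P_def by (simp add: prod_dividef prod_power_distrib)
  ultimately show ?thesis
    using \<open>1 \<le> P\<close> by (simp add: power_mult[symmetric] mult.commute frac_le)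
qed

lemma summable_on_inverse_square_int: "(\<lambda>n::int. 1 / (1 + real_of_int \<bar>n\<bar>)^2) summable_on UNIV"
proof -
  let ?g = "\<lambda>n::int. 1 / (1 + real_of_int \<bar>n\<bar>)^2"
  have "summable (\<lambda>n::nat. 1 / (real (Suc n))^2)"
    using inverse_power_summable[of 2, where 'a=real] by (subst summable_Suc_iff) (simp add: inverse_eq_divide)
  then have nat: "(\<lambda>n::nat. 1 / (1 + real n)^2) summable_on UNIV"
    by (subst summable_on_UNIV_nonneg_real_iff) (auto simp: add.commute)
  have "?g summable_on (range int)"
    by (subst summable_on_reindex) (auto simp: o_def nat)
  moreover have "?g summable_on (range (\<lambda>n. - int n))"
    by (subst summable_on_reindex) (auto simp: o_def nat inj_on_def)
  ultimately have "?g summable_on (range int \<union> range (\<lambda>n. - int n))"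
    by (rule summable_on_union)
  moreover have "range int \<union> range (\<lambda>n. - int n) = UNIV"
    by (auto, metis imageI nonneg_int_cases rangeI neg_equal_iff_equal int_cases2)
  ultimately show ?thesis by simp
qed

lemma summable_on_lattice_weight: "(lattice_weight :: ('d::finite \<Rightarrow> int) \<Rightarrow> real) summable_on UNIV"
proof -
  let ?g = "\<lambda>n::int. 1 / (1 + real_of_int \<bar>n\<bar>)^2"
  have "Infinite_Sum.abs_summable_on ?g UNIV"
    using summable_on_inverse_square_int by simp
  then have "Infinite_Set_Sum.abs_summable_on ?g UNIV"
    by (simp only: abs_summable_equivalent)
  then have "Infinite_Set_Sum.abs_summable_on (\<lambda>k::'d\<Rightarrow>int. \<Prod>i\<in>UNIV. ?g (k i)) (PiE UNIV (\<lambda>_. UNIV))"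
    by (intro abs_summable_on_prod_PiE) auto
  then have "Infinite_Sum.abs_summable_on (\<lambda>k::'d\<Rightarrow>int. \<Prod>i\<in>UNIV. ?g (k i)) UNIV"
    by (simp only: abs_summable_equivalent PiE_UNIV_domain Pi_UNIV)
  then show ?thesis
    unfolding lattice_weight_def by (rule abs_summable_summable)
qed

lemma slowly_growing_boundE:
  fixes c :: "'d::finite fseq"
  assumes "slowly_growing c"
  obtains C N where "0 \<le> C" "\<And>k. cmod (c k) \<le> C * (1 + kabs k) ^ N"
proof -
  obtain C N where bound: "\<And>k. cmod (c k) \<le> C * (1 + kabs k) ^ N"
    using assms unfolding slowly_growing_def by blast
  have "0 \<le> C * (1 + kabs (undefined::'d\<Rightarrow>int)) ^ N"
    using bound[of undefined] norm_ge_zero order_trans by blast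
  then have "0 \<le> C"
    using kabs_power_pos[of "undefined::'d\<Rightarrow>int" N] by (simp add: zero_le_mult_iff not_le[symmetric])
  with bound that show ?thesis by blast
qed

lemma rapidly_decaying_boundE:
  fixes c :: "'d::finite fseq"
  assumes "rapidly_decaying c"
  obtains C where "0 \<le> C" "\<And>k. cmod (c k) * (1 + kabs k) ^ N \<le> C"
proof -
  obtain C where bound: "\<And>k. cmod (c k) * (1 + kabs k) ^ N \<le> C"
    using assms unfolding rapidly_decaying_def by blast
  have "0 \<le> cmod (c undefined) * (1 + kabs (undefined::'d\<Rightarrow>int)) ^ N"
    by (simp add: add_nonneg_nonneg)
  then have "0 \<le> C"
    using bound[of undefined] by linarith
  with bound that show ?thesis by blast
qed

lemma rapidly_decaying_le_lattice_weight:
  fixes c :: "'d::finite fseq"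
  assumes "rapidly_decaying c"
  obtains B where "0 \<le> B" "\<And>k. cmod (c k) \<le> B * lattice_weight k / (1 + kabs k)"
proof -
  obtain B where "0 \<le> B" and B: "\<And>k. cmod (c k) * (1 + kabs k) ^ (2 * CARD('d) + 1) \<le> B"
    using rapidly_decaying_boundE[OF assms] by blast
  have "cmod (c k) \<le> B * lattice_weight k / (1 + kabs k)" for k
  proof -
    have pos: "0 < 1 + kabs k"
      by (simp add: add_pos_nonneg)
    have "cmod (c k) \<le> B / (1 + kabs k) ^ (2 * CARD('d) + 1)"
      using B[of k] pos by (subst pos_le_divide_eq) auto
    also have "\<dots> = B * (1 / (1 + kabs k) ^ (2 * CARD('d))) / (1 + kabs k)"
      by (simp add: field_simps)
    also have "\<dots> \<le> B * lattice_weight k / (1 + kabs k)"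
      using lattice_weight_ge[of k] \<open>0 \<le> B\<close> pos by (intro divide_right_mono mult_left_mono) auto
    finally show ?thesis .
  qed
  with \<open>0 \<le> B\<close> that show ?thesis by blast
qed

lemma rapidly_decaying_abs_summable:
  fixes c :: "'d::finite fseq"
  assumes "rapidly_decaying c"
  shows "(\<lambda>k. cmod (c k)) summable_on UNIV"
proof -
  obtain B where "0 \<le> B" and B: "\<And>k. cmod (c k) \<le> B * lattice_weight k / (1 + kabs k)"
    using rapidly_decaying_le_lattice_weight[OF assms] by blast
  have "cmod (c k) \<le> B * lattice_weight k" for k
  proof -
    have "B * lattice_weight k / (1 + kabs k) \<le> B * lattice_weight k / 1"
      using \<open>0 \<le> B\<close> lattice_weight_pos[of k]
      by (intro divide_left_mono) (auto simp: add_pos_nonneg)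
    then show ?thesis
      using B[of k] by simp
  qed
  then show ?thesis
    by (intro summable_on_comparison_test[OF summable_on_cmult_right[OF summable_on_lattice_weight]]) simp_all
qed

lemma rapidly_decaying_summable:
  fixes c :: "'d::finite fseq"
  shows "rapidly_decaying c \<Longrightarrow> c summable_on UNIV"
  by (rule abs_summable_summable[OF rapidly_decaying_abs_summable])

lemma rapidly_decaying_imp_slowly_growing: "rapidly_decaying c \<Longrightarrow> slowly_growing c"
  unfolding rapidly_decaying_def slowly_growing_def
  by (erule allE[of _ 0], erule exE, rule exI, rule exI[of _ 0]) simp

lemma slowly_growing_mult_rapidly_decaying:
  assumes "slowly_growing a" "rapidly_decaying b"
  shows "rapidly_decaying (\<lambda>k. a k * b k)"
  unfolding rapidly_decaying_def
proof
  fix N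
  obtain Ca Na where "0 \<le> Ca" and a: "\<And>k. cmod (a k) \<le> Ca * (1 + kabs k) ^ Na"
    using slowly_growing_boundE[OF assms(1)] by blast
  obtain Cb where b: "\<And>k. cmod (b k) * (1 + kabs k) ^ (N + Na) \<le> Cb"
    using rapidly_decaying_boundE[OF assms(2)] by blast
  have "cmod (a k * b k) * (1 + kabs k) ^ N \<le> Ca * Cb" for k
  proof -
    have "cmod (a k * b k) * (1 + kabs k) ^ N \<le> (Ca * (1 + kabs k) ^ Na) * cmod (b k) * (1 + kabs k) ^ N"
      using a[of k] by (simp add: norm_mult mult_right_mono add_nonneg_nonneg)
    also have "\<dots> = Ca * (cmod (b k) * (1 + kabs k) ^ (N + Na))"
      by (simp add: power_add algebra_simps)
    also have "\<dots> \<le> Ca * Cb"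
      using b[of k] \<open>0 \<le> Ca\<close> by (simp add: mult_left_mono)
    finally show ?thesis .
  qed
  then show "\<exists>C. \<forall>k. cmod (a k * b k) * (1 + kabs k) ^ N \<le> C" by blast
qed

lemma slowly_growing_mult:
  assumes "slowly_growing a" "slowly_growing b"
  shows "slowly_growing (\<lambda>k. a k * b k)"
proof -
  obtain Ca Na where "0 \<le> Ca" and a: "\<And>k. cmod (a k) \<le> Ca * (1 + kabs k) ^ Na"
    using slowly_growing_boundE[OF assms(1)] by blast
  obtain Cb Nb where "0 \<le> Cb" and b: "\<And>k. cmod (b k) \<le> Cb * (1 + kabs k) ^ Nb"
    using slowly_growing_boundE[OF assms(2)] by blast
  have "cmod (a k * b k) \<le> (Ca * Cb) * (1 + kabs k) ^ (Na + Nb)" for k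
  proof -
    have "cmod (a k * b k) \<le> (Ca * (1 + kabs k) ^ Na) * (Cb * (1 + kabs k) ^ Nb)"
      unfolding norm_mult using a b \<open>0 \<le> Ca\<close> \<open>0 \<le> Cb\<close>
      by (intro mult_mono) (auto simp: add_nonneg_nonneg)
    then show ?thesis by (simp add: power_add algebra_simps)
  qed
  then show ?thesis unfolding slowly_growing_def by blast
qed

lemma slowly_growing_add:
  assumes "slowly_growing a" "slowly_growing b"
  shows "slowly_growing (\<lambda>k. a k + b k)"
proof -
  obtain Ca Na where "0 \<le> Ca" and a: "\<And>k. cmod (a k) \<le> Ca * (1 + kabs k) ^ Na"
    using slowly_growing_boundE[OF assms(1)] by blast
  obtain Cb Nb where "0 \<le> Cb" and b: "\<And>k. cmod (b k) \<le> Cb * (1 + kabs k) ^ Nb"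
    using slowly_growing_boundE[OF assms(2)] by blast
  have "cmod (a k + b k) \<le> (Ca + Cb) * (1 + kabs k) ^ (Na + Nb)" for k
  proof -
    have "cmod (a k + b k) \<le> Ca * (1 + kabs k) ^ Na + Cb * (1 + kabs k) ^ Nb"
      using a[of k] b[of k] norm_triangle_ineq[of "a k" "b k"] by linarith
    also have "\<dots> \<le> Ca * (1 + kabs k) ^ (Na + Nb) + Cb * (1 + kabs k) ^ (Na + Nb)"
      using \<open>0 \<le> Ca\<close> \<open>0 \<le> Cb\<close>
      by (intro add_mono mult_left_mono kabs_power_mono) auto
    finally show ?thesis by (simp add: algebra_simps)
  qed
  then show ?thesis unfolding slowly_growing_def by blast
qed

lemma slowly_growing_bounded: "(\<And>k. cmod (c k) \<le> B) \<Longrightarrow> slowly_growing c"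
  unfolding slowly_growing_def by (rule exI[of _ B], rule exI[of _ 0]) simp

lemma slowly_growing_const: "slowly_growing (\<lambda>k. a)"
  by (rule slowly_growing_bounded[of _ "cmod a"]) simp

lemma slowly_growing_dominated:
  "slowly_growing g \<Longrightarrow> (\<And>k. cmod (f k) \<le> cmod (g k)) \<Longrightarrow> slowly_growing f"
  unfolding slowly_growing_def by (meson order_trans)

lemma slowly_growing_norm: "slowly_growing a \<Longrightarrow> slowly_growing (\<lambda>k. of_real (cmod (a k)))"
  unfolding slowly_growing_def by simp

lemma slowly_growing_kneg: "slowly_growing c \<Longrightarrow> slowly_growing (\<lambda>k. c (kneg k))"
  unfolding slowly_growing_def by (metis kabs_kneg)

lemma rapidly_decaying_kneg: "rapidly_decaying c \<Longrightarrow> rapidly_decaying (\<lambda>k. c (kneg k))"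
  unfolding rapidly_decaying_def by (metis kabs_kneg)

lemma rapidly_decaying_cmult: "rapidly_decaying c \<Longrightarrow> rapidly_decaying (\<lambda>k. a * c k)"
  by (rule slowly_growing_mult_rapidly_decaying[OF slowly_growing_const])

lemma rapidly_decaying_finite_support:
  assumes "finite S" "\<And>k. k \<notin> S \<Longrightarrow> c k = 0"
  shows "rapidly_decaying c"
  unfolding rapidly_decaying_def
proof
  fix N
  have "cmod (c k) * (1 + kabs k) ^ N \<le> (\<Sum>j\<in>S. cmod (c j) * (1 + kabs j) ^ N)" for k
    using assms by (cases "k \<in> S") (auto intro!: member_le_sum sum_nonneg simp: add_nonneg_nonneg)
  then show "\<exists>C. \<forall>k. cmod (c k) * (1 + kabs k) ^ N \<le> C" by blast
qed

lemma hermitian_add: "hermitian a \<Longrightarrow> hermitian b \<Longrightarrow> hermitian (\<lambda>k. a k + b k)"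
  and hermitian_mult: "hermitian a \<Longrightarrow> hermitian b \<Longrightarrow> hermitian (\<lambda>k. a k * b k)"
  and hermitian_scaleR: "hermitian a \<Longrightarrow> hermitian (\<lambda>k. of_real c * a k)"
  and hermitian_zero: "hermitian (\<lambda>k. 0)"
  and hermitian_kneg: "hermitian a \<Longrightarrow> hermitian (\<lambda>k. a (kneg k))"
  unfolding hermitian_def by simp_all

lemma Sspace_rapidly_decaying: "\<phi> \<in> Sspace \<Longrightarrow> rapidly_decaying \<phi>"
  unfolding Sspace_def by blast

lemma Sdual_slowly_growing: "f \<in> Sdual \<Longrightarrow> slowly_growing f"
  and Sdual_hermitian: "f \<in> Sdual \<Longrightarrow> hermitian f"
  unfolding Sdual_def by blast+

lemma Sspace_subset_Sdual: "Sspace \<subseteq> Sdual"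
  unfolding Sspace_def Sdual_def using rapidly_decaying_imp_slowly_growing by blast

lemma Sspace_scaleR: "\<phi> \<in> Sspace \<Longrightarrow> (\<lambda>k. of_real c * \<phi> k) \<in> Sspace"
  unfolding Sspace_def by (auto intro: rapidly_decaying_cmult hermitian_scaleR)

lemma Sspace_mult: "a \<in> LSI \<Longrightarrow> \<phi> \<in> Sspace \<Longrightarrow> (\<lambda>k. a k * \<phi> k) \<in> Sspace"
  unfolding Sspace_def LSI_def by (auto intro: slowly_growing_mult_rapidly_decaying hermitian_mult)

lemma Sdual_add: "a \<in> Sdual \<Longrightarrow> b \<in> Sdual \<Longrightarrow> (\<lambda>k. a k + b k) \<in> Sdual"
  unfolding Sdual_def by (auto intro: slowly_growing_add hermitian_add)

lemma Sdual_scaleR: "a \<in> Sdual \<Longrightarrow> (\<lambda>k. of_real c * a k) \<in> Sdual"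
  unfolding Sdual_def by (auto intro: slowly_growing_mult[OF slowly_growing_const] hermitian_scaleR)

lemma Sdual_diff: "a \<in> Sdual \<Longrightarrow> b \<in> Sdual \<Longrightarrow> (\<lambda>k. a k - b k) \<in> Sdual"
  using Sdual_add[of a "\<lambda>k. of_real (-1) * b k"] Sdual_scaleR[of b "-1"] by simp

lemma Sdual_zero: "(\<lambda>k. 0) \<in> Sdual"
  unfolding Sdual_def by (auto intro: slowly_growing_const hermitian_zero)

lemma Sdual_mult: "a \<in> LSI \<Longrightarrow> b \<in> Sdual \<Longrightarrow> (\<lambda>k. a k * b k) \<in> Sdual"
  unfolding Sdual_def LSI_def by (auto intro: slowly_growing_mult hermitian_mult)

lemma abs_summable_eval_fun:
  fixes \<phi> :: "'d::finite fseq"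
  assumes "rapidly_decaying \<phi>"
  shows "(\<lambda>k. cmod (\<phi> k * cis (inner_xk x k))) summable_on UNIV"
  using rapidly_decaying_abs_summable[OF assms] by (simp add: norm_mult)

lemma norm_eval_fun_le_l1:
  fixes \<phi> :: "'d::finite fseq"
  assumes "rapidly_decaying \<phi>"
  shows "cmod (eval_fun \<phi> x) \<le> infsum (\<lambda>k. cmod (\<phi> k)) UNIV"
  using norm_infsum_bound[OF abs_summable_eval_fun[OF assms]]
  unfolding eval_fun_def by (simp add: norm_mult)

lemma norm_eval_fun_le_sup_norm:
  fixes \<phi> :: "'d::finite fseq"
  assumes "rapidly_decaying \<phi>"
  shows "cmod (eval_fun \<phi> x) \<le> sup_norm \<phi>"
  unfolding sup_norm_def using norm_eval_fun_le_l1[OF assms]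
  by (intro cSUP_upper bdd_aboveI2) auto

lemma sup_norm_le: "(\<And>x. cmod (eval_fun \<phi> x) \<le> B) \<Longrightarrow> sup_norm \<phi> \<le> B"
  unfolding sup_norm_def by (rule cSUP_least) auto

lemma sup_norm_nonneg: "rapidly_decaying \<phi> \<Longrightarrow> 0 \<le> sup_norm \<phi>"
  using norm_eval_fun_le_sup_norm norm_ge_zero order_trans by blast

lemma eval_fun_cmult: "eval_fun (\<lambda>k. c * \<phi> k) x = c * eval_fun \<phi> x"
  unfolding eval_fun_def by (simp add: mult.assoc infsum_cmult_right')

lemma eval_fun_add:
  assumes "rapidly_decaying \<phi>" "rapidly_decaying \<psi>"
  shows "eval_fun (\<lambda>k. \<phi> k + \<psi> k) x = eval_fun \<phi> x + eval_fun \<psi> x"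
  using infsum_add[OF abs_summable_summable[OF abs_summable_eval_fun[OF assms(1)]]
                      abs_summable_summable[OF abs_summable_eval_fun[OF assms(2)]]]
  unfolding eval_fun_def by (simp add: distrib_right)

lemma sup_norm_scaleR_le:
  assumes "rapidly_decaying \<phi>"
  shows "sup_norm (\<lambda>k. of_real c * \<phi> k) \<le> \<bar>c\<bar> * sup_norm \<phi>"
  using norm_eval_fun_le_sup_norm[OF assms]
  by (intro sup_norm_le) (simp add: eval_fun_cmult norm_mult mult_left_mono)

lemma sup_norm_scaleR:
  assumes "rapidly_decaying \<phi>"
  shows "sup_norm (\<lambda>k. of_real c * \<phi> k) = \<bar>c\<bar> * sup_norm \<phi>"
proof (cases "c = 0")
  case True
  then show ?thesis
    by (simp add: sup_norm_def eval_fun_def)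
next
  case False
  have "sup_norm \<phi> = sup_norm (\<lambda>k. of_real (1 / c) * (of_real c * \<phi> k))"
    using False by simp
  also have "\<dots> \<le> \<bar>1 / c\<bar> * sup_norm (\<lambda>k. of_real c * \<phi> k)"
    by (intro sup_norm_scaleR_le rapidly_decaying_cmult assms)
  finally have "\<bar>c\<bar> * sup_norm \<phi> \<le> sup_norm (\<lambda>k. of_real c * \<phi> k)"
    using False by (simp add: field_simps)
  with sup_norm_scaleR_le[OF assms, of c] show ?thesis
    by linarith
qed

section \<open>Fourier coefficients are bounded by the sup norm\<close>

lemma cis_sum: "cis (\<Sum>i\<in>A. f i) = (\<Prod>i\<in>A. cis (f i))"
  by (induction A rule: infinite_finite_induct) (simp_all add: cis_mult[symmetric])

lemma sum_roots_of_unity: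
  assumes "0 < N"
  shows "(\<Sum>t<N. cis (2 * pi * real t * real_of_int v / real N)) = (if int N dvd v then of_nat N else 0)"
proof -
  define z where "z = cis (2 * pi * real_of_int v / real N)"
  have powers: "cis (2 * pi * real t * real_of_int v / real N) = z ^ t" for t
    unfolding z_def Complex.DeMoivre by (rule arg_cong[where f=cis]) (simp add: field_simps)
  show ?thesis
  proof (cases "int N dvd v")
    case True
    then obtain q where q: "v = int N * q" by blast
    have "cis (2 * pi * real t * real_of_int v / real N) = 1" for t
    proof -
      have "2 * pi * real t * real_of_int v / real N = 2 * pi * of_int (int t * q)"
        using assms by (simp add: q field_simps)
      then show ?thesis by (simp del: of_int_mult)
    qed
    then show ?thesis
      using True by simp
  next
    case False
    have "z \<noteq> 1"
    proof
      assume "z = 1"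
      then obtain n :: int where "2 * pi * real_of_int v / real N = of_int (2 * n) * pi"
        unfolding z_def cis_conv_exp exp_eq_1 by auto
      then have "real_of_int v = real_of_int (n * int N)"
        using assms pi_gt_zero by (simp add: field_simps)
      then show False
        using False by (metis dvd_triv_right of_int_eq_iff)
    qed
    moreover have "z ^ N = cis (2 * pi * real_of_int v)"
      unfolding z_def Complex.DeMoivre using assms by (simp add: field_simps)
    then have "z ^ N = 1"
      by simp
    ultimately show ?thesis
      using False by (simp add: powers sum_gp_strict)
  qed
qed

definition grid :: "nat \<Rightarrow> ('d::finite \<Rightarrow> nat) set" where
  "grid N = PiE UNIV (\<lambda>_. {..<N})"

definition grid_point :: "nat \<Rightarrow> ('d::finite \<Rightarrow> nat) \<Rightarrow> ('d \<Rightarrow> real)" where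
  "grid_point N j = (\<lambda>i. 2 * pi * real (j i) / real N)"

lemma finite_grid: "finite (grid N)"
  unfolding grid_def by (intro finite_PiE) auto

lemma card_grid: "card (grid N :: ('d::finite \<Rightarrow> nat) set) = N ^ CARD('d)"
  unfolding grid_def by (simp add: card_PiE)

lemma sum_grid_cis:
  assumes "0 < N"
  shows "(\<Sum>j\<in>(grid N :: ('d::finite \<Rightarrow> nat) set). cis (inner_xk (grid_point N j) v))
         = (if \<forall>i. int N dvd v i then of_nat N ^ CARD('d) else 0)"
proof -
  have "(\<Sum>j\<in>(grid N :: ('d \<Rightarrow> nat) set). cis (inner_xk (grid_point N j) v))
      = (\<Prod>i\<in>(UNIV::'d set). \<Sum>t<N. cis (2 * pi * real t * real_of_int (v i) / real N))"
    unfolding inner_xk_def grid_point_def cis_sum grid_def by (subst prod_sum_PiE) auto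
  also have "\<dots> = (\<Prod>i\<in>(UNIV::'d set). if int N dvd v i then of_nat N else 0)"
    using sum_roots_of_unity[OF assms] by simp
  also have "\<dots> = (if \<forall>i. int N dvd v i then of_nat N ^ CARD('d) else 0)"
    by (cases "\<forall>i. int N dvd v i") (auto intro: prod_zero)
  finally show ?thesis .
qed

lemma inner_xk_diff: "inner_xk x m - inner_xk x k = inner_xk x (\<lambda>i. m i - k i)"
  unfolding inner_xk_def by (simp add: sum_subtractf[symmetric] algebra_simps)

lemma infsum_sum:
  fixes F :: "'i \<Rightarrow> 'a \<Rightarrow> 'b::{topological_comm_monoid_add, t2_space}"
  assumes "finite J" "\<And>j. j \<in> J \<Longrightarrow> F j summable_on A"
  shows "(\<Sum>j\<in>J. infsum (F j) A) = infsum (\<lambda>m. \<Sum>j\<in>J. F j m) A"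
    and "(\<lambda>m. \<Sum>j\<in>J. F j m) summable_on A"
  using assms by (induction J rule: finite_induct) (simp_all add: infsum_add summable_on_add)

definition grid_coeff :: "nat \<Rightarrow> 'd::finite fseq \<Rightarrow> ('d \<Rightarrow> int) \<Rightarrow> complex" where
  "grid_coeff N \<phi> k = (\<Sum>j\<in>grid N. eval_fun \<phi> (grid_point N j) * cis (- inner_xk (grid_point N j) k))
                       / of_nat N ^ CARD('d)"

definition congruent_mod :: "nat \<Rightarrow> ('d \<Rightarrow> int) \<Rightarrow> ('d \<Rightarrow> int) \<Rightarrow> bool" where
  "congruent_mod N m k \<longleftrightarrow> (\<forall>i. int N dvd (m i - k i))"

lemma congruent_mod_kabs_ge:
  assumes "congruent_mod N m k" "m \<noteq> k"
  shows "real N \<le> kabs m + kabs k"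
proof -
  obtain i where "m i \<noteq> k i"
    using assms(2) by (auto simp: fun_eq_iff)
  with assms(1) have "int N \<le> \<bar>m i - k i\<bar>"
    using dvd_imp_le_int[of "m i - k i" "int N"] unfolding congruent_mod_def by simp
  then show ?thesis
    using abs_component_le_kabs[of m i] abs_component_le_kabs[of k i] by linarith
qed

lemma norm_grid_coeff_le_sup_norm:
  fixes \<phi> :: "'d::finite fseq"
  assumes "0 < N" "rapidly_decaying \<phi>"
  shows "cmod (grid_coeff N \<phi> k) \<le> sup_norm \<phi>"
proof -
  have "cmod (\<Sum>j\<in>grid N. eval_fun \<phi> (grid_point N j) * cis (- inner_xk (grid_point N j) k))
        \<le> (\<Sum>j\<in>(grid N :: ('d \<Rightarrow> nat) set). sup_norm \<phi>)"
    using norm_eval_fun_le_sup_norm[OF assms(2)]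
    by (intro order_trans[OF norm_sum] sum_mono) (simp add: norm_mult)
  also have "\<dots> = real N ^ CARD('d) * sup_norm \<phi>"
    by (simp add: card_grid)
  finally show ?thesis
    using assms(1) unfolding grid_coeff_def by (simp add: norm_divide norm_power field_simps)
qed

lemma grid_coeff_eq_aliased_sum:
  fixes \<phi> :: "'d::finite fseq"
  assumes "0 < N" "rapidly_decaying \<phi>"
  shows "grid_coeff N \<phi> k = infsum (\<lambda>m. if congruent_mod N m k then \<phi> m else 0) UNIV"
proof -
  define F where "F j m = \<phi> m * cis (inner_xk (grid_point N j) (\<lambda>i. m i - k i))" for j m
  have summable_F: "F j summable_on UNIV" for j
    using rapidly_decaying_summable[OF slowly_growing_mult_rapidly_decaying[OF
          slowly_growing_bounded[of _ 1] assms(2)], of "\<lambda>m. cis (inner_xk (grid_point N j) (\<lambda>i. m i - k i))"]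
    unfolding F_def by (simp add: mult.commute)
  have "eval_fun \<phi> (grid_point N j) * cis (- inner_xk (grid_point N j) k) = infsum (F j) UNIV" for j
    unfolding eval_fun_def F_def infsum_cmult_left'[symmetric]
    by (simp add: mult.assoc cis_mult inner_xk_diff[symmetric])
  then have "grid_coeff N \<phi> k = infsum (\<lambda>m. \<Sum>j\<in>grid N. F j m) UNIV / of_nat N ^ CARD('d)"
    unfolding grid_coeff_def by (simp add: infsum_sum(1)[OF finite_grid summable_F])
  also have "(\<lambda>m. \<Sum>j\<in>grid N. F j m) = (\<lambda>m. of_nat N ^ CARD('d) * (if congruent_mod N m k then \<phi> m else 0))"
    by (rule ext) (simp add: F_def congruent_mod_def sum_distrib_left[symmetric] sum_grid_cis[OF assms(1)])
  finally show ?thesis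
    using assms(1) by (simp add: infsum_cmult_right')
qed

lemma grid_coeff_minus_coeff_eq:
  fixes \<phi> :: "'d::finite fseq"
  assumes "0 < N" "rapidly_decaying \<phi>"
  shows "grid_coeff N \<phi> k - \<phi> k = infsum (\<lambda>m. if congruent_mod N m k then \<phi> m else 0) (UNIV - {k})"
proof -
  define \<psi> where "\<psi> m = (if congruent_mod N m k then \<phi> m else 0)" for m
  have "\<psi> summable_on UNIV"
    by (rule abs_summable_summable, rule summable_on_comparison_test[OF
          rapidly_decaying_abs_summable[OF assms(2)]]) (simp_all add: \<psi>_def)
  then have "infsum \<psi> (UNIV - {k}) = infsum \<psi> UNIV - infsum \<psi> {k}"
    by (rule infsum_Diff) simp_all
  also have "\<dots> = grid_coeff N \<phi> k - \<phi> k"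
    using grid_coeff_eq_aliased_sum[OF assms, of k] by (simp add: \<psi>_def[abs_def] congruent_mod_def)
  finally show ?thesis
    unfolding \<psi>_def by simp
qed

lemma norm_grid_coeff_minus_coeff_le:
  fixes \<phi> :: "'d::finite fseq"
  assumes "kabs k < real N" "rapidly_decaying \<phi>"
    and "0 \<le> B" and bound: "\<And>m. cmod (\<phi> m) \<le> B * lattice_weight m / (1 + kabs m)"
  shows "cmod (grid_coeff N \<phi> k - \<phi> k)
           \<le> B * infsum (lattice_weight :: ('d \<Rightarrow> int) \<Rightarrow> real) UNIV / (1 + real N - kabs k)"
proof -
  define D where "D = 1 + real N - kabs k"
  define \<psi> where "\<psi> m = (if congruent_mod N m k then \<phi> m else 0)" for m
  have "0 < N" "0 < D"
    using assms(1) kabs_nonneg[of k] unfolding D_def by linarith+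
  have summable_\<psi>: "(\<lambda>m. cmod (\<psi> m)) summable_on UNIV - {k}"
    by (intro summable_on_subset_banach[OF summable_on_comparison_test[OF
          rapidly_decaying_abs_summable[OF assms(2)]]]) (auto simp: \<psi>_def)
  have "cmod (grid_coeff N \<phi> k - \<phi> k) \<le> infsum (\<lambda>m. cmod (\<psi> m)) (UNIV - {k})"
    unfolding grid_coeff_minus_coeff_eq[OF \<open>0 < N\<close> assms(2)] \<psi>_def[symmetric]
    by (rule norm_infsum_bound[OF summable_\<psi>])
  also have "\<dots> \<le> infsum (\<lambda>m. B / D * lattice_weight m) (UNIV - {k})"
  proof (rule infsum_mono[OF summable_\<psi>])
    show "(\<lambda>m. B / D * lattice_weight m) summable_on UNIV - {k}"
      by (intro summable_on_cmult_right summable_on_subset_banach[OF summable_on_lattice_weight]) auto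
    fix m assume "m \<in> UNIV - {k}"
    show "cmod (\<psi> m) \<le> B / D * lattice_weight m"
    proof (cases "congruent_mod N m k")
      case True
      then have "D \<le> 1 + kabs m"
        using congruent_mod_kabs_ge[OF True] \<open>m \<in> UNIV - {k}\<close> unfolding D_def by auto
      then have "B * lattice_weight m / (1 + kabs m) \<le> B * lattice_weight m / D"
        using \<open>0 < D\<close> \<open>0 \<le> B\<close> lattice_weight_pos[of m]
        by (intro divide_left_mono) (auto simp: less_imp_le)
      then show ?thesis
        using bound[of m] True by (simp add: \<psi>_def)
    qed (use \<open>0 < D\<close> \<open>0 \<le> B\<close> lattice_weight_pos[of m] in \<open>simp add: \<psi>_def less_imp_le\<close>)
  qed
  also have "\<dots> = B / D * infsum lattice_weight (UNIV - {k})"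
    by (rule infsum_cmult_right')
  also have "\<dots> \<le> B / D * infsum (lattice_weight :: ('d \<Rightarrow> int) \<Rightarrow> real) UNIV"
    using \<open>0 \<le> B\<close> \<open>0 < D\<close>
    by (intro mult_left_mono infsum_mono2 summable_on_lattice_weight
          summable_on_subset_banach[OF summable_on_lattice_weight]) (auto simp: lattice_weight_nonneg)
  finally show ?thesis
    unfolding D_def by simp
qed

lemma norm_coeff_le_sup_norm:
  fixes \<phi> :: "'d::finite fseq"
  assumes "rapidly_decaying \<phi>"
  shows "cmod (\<phi> k) \<le> sup_norm \<phi>"
proof (rule field_le_epsilon)
  fix e :: real assume "0 < e"
  obtain B where "0 \<le> B" and B: "\<And>m. cmod (\<phi> m) \<le> B * lattice_weight m / (1 + kabs m)"
    using rapidly_decaying_le_lattice_weight[OF assms] by blast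
  define S where "S = infsum lattice_weight (UNIV :: ('d \<Rightarrow> int) set)"
  define N where "N = nat \<lceil>kabs k\<rceil> + nat \<lceil>B * S / e\<rceil> + 1"
  have "kabs k < real N" "B * S / e \<le> 1 + real N - kabs k"
    unfolding N_def by linarith+
  then have "B * S / (1 + real N - kabs k) \<le> e"
    using \<open>0 < e\<close> by (simp add: pos_divide_le_eq mult.commute)
  then have "cmod (grid_coeff N \<phi> k - \<phi> k) \<le> e"
    using norm_grid_coeff_minus_coeff_le[OF \<open>kabs k < real N\<close> assms \<open>0 \<le> B\<close> B]
    unfolding S_def by linarith
  moreover have "cmod (grid_coeff N \<phi> k) \<le> sup_norm \<phi>"
    using \<open>kabs k < real N\<close> kabs_nonneg[of k]
    by (intro norm_grid_coeff_le_sup_norm assms) linarith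
  moreover have "cmod (\<phi> k) \<le> cmod (grid_coeff N \<phi> k) + cmod (grid_coeff N \<phi> k - \<phi> k)"
    using norm_triangle_ineq4[of "grid_coeff N \<phi> k" "grid_coeff N \<phi> k - \<phi> k"] by simp
  ultimately show "cmod (\<phi> k) \<le> sup_norm \<phi> + e"
    by linarith
qed

lemma rapidly_decaying_pairing_terms:
  "slowly_growing f \<Longrightarrow> rapidly_decaying \<phi> \<Longrightarrow> rapidly_decaying (\<lambda>k. f k * \<phi> (kneg k))"
  by (intro slowly_growing_mult_rapidly_decaying rapidly_decaying_kneg)

lemma abs_summable_pairing_terms:
  fixes f :: "'d::finite fseq"
  shows "slowly_growing f \<Longrightarrow> rapidly_decaying \<phi> \<Longrightarrow> (\<lambda>k. cmod (f k * \<phi> (kneg k))) summable_on UNIV"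
  by (intro rapidly_decaying_abs_summable rapidly_decaying_pairing_terms)

lemma pairing_add_left:
  fixes f g :: "'d::finite fseq"
  assumes "slowly_growing f" "slowly_growing g" "rapidly_decaying \<phi>"
  shows "pairing (\<lambda>k. f k + g k) \<phi> = pairing f \<phi> + pairing g \<phi>"
  using infsum_add[OF rapidly_decaying_summable[OF rapidly_decaying_pairing_terms[OF assms(1,3)]]
                      rapidly_decaying_summable[OF rapidly_decaying_pairing_terms[OF assms(2,3)]]]
  unfolding pairing_def by (simp add: distrib_right)

lemma pairing_add_right:
  fixes f :: "'d::finite fseq"
  assumes "slowly_growing f" "rapidly_decaying \<phi>" "rapidly_decaying \<psi>"
  shows "pairing f (\<lambda>k. \<phi> k + \<psi> k) = pairing f \<phi> + pairing f \<psi>"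
  using infsum_add[OF rapidly_decaying_summable[OF rapidly_decaying_pairing_terms[OF assms(1,2)]]
                      rapidly_decaying_summable[OF rapidly_decaying_pairing_terms[OF assms(1,3)]]]
  unfolding pairing_def by (simp add: distrib_left)

lemma pairing_scaleR_left: "pairing (\<lambda>k. of_real c * f k) \<phi> = c * pairing f \<phi>"
  unfolding pairing_def by (simp add: mult.assoc infsum_cmult_right')

lemma pairing_scaleR_right: "pairing f (\<lambda>k. of_real c * \<phi> k) = c * pairing f \<phi>"
  unfolding pairing_def by (simp add: mult.left_commute infsum_cmult_right')

lemma pairing_mult_transpose: "pairing (\<lambda>k. a k * g k) \<phi> = pairing g (\<lambda>k. a (kneg k) * \<phi> k)"
  unfolding pairing_def by (simp add: mult_ac)

lemma abs_pairing_le: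
  fixes f :: "'d::finite fseq"
  assumes "slowly_growing f" "rapidly_decaying \<phi>"
  shows "\<bar>pairing f \<phi>\<bar> \<le> infsum (\<lambda>k. cmod (f k * \<phi> (kneg k))) UNIV"
  unfolding pairing_def
  by (rule order_trans[OF abs_Re_le_cmod norm_infsum_bound[OF abs_summable_pairing_terms[OF assms]]])

lemma abs_pairing_le_l1_sup_norm:
  fixes v :: "'d::finite fseq"
  assumes "rapidly_decaying v" "rapidly_decaying \<phi>"
  shows "\<bar>pairing v \<phi>\<bar> \<le> infsum (\<lambda>k. cmod (v k)) UNIV * sup_norm \<phi>"
proof -
  have "\<bar>pairing v \<phi>\<bar> \<le> infsum (\<lambda>k. cmod (v k * \<phi> (kneg k))) UNIV"
    using abs_pairing_le[OF rapidly_decaying_imp_slowly_growing[OF assms(1)] assms(2)] .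
  also have "\<dots> \<le> infsum (\<lambda>k. cmod (v k) * sup_norm \<phi>) UNIV"
    using norm_coeff_le_sup_norm[OF assms(2)]
    by (intro infsum_mono abs_summable_pairing_terms[OF rapidly_decaying_imp_slowly_growing[OF assms(1)] assms(2)]
          summable_on_cmult_left rapidly_decaying_abs_summable assms(1))
       (simp add: norm_mult mult_left_mono)
  also have "\<dots> = infsum (\<lambda>k. cmod (v k)) UNIV * sup_norm \<phi>"
    by (rule infsum_cmult_left')
  finally show ?thesis .
qed

definition unit_coeff :: "('d::finite \<Rightarrow> int) \<Rightarrow> 'd fseq" where
  "unit_coeff m = (\<lambda>j. if j = m then 1 else 0)"

lemma rapidly_decaying_unit_coeff: "rapidly_decaying (\<lambda>j. a * unit_coeff m j)"
  by (rule rapidly_decaying_finite_support[of "{m}"]) (auto simp: unit_coeff_def)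

lemma infsum_unit_coeff: "infsum (\<lambda>j. f j * unit_coeff m j) UNIV = f m"
proof -
  have "infsum (\<lambda>j. f j * unit_coeff m j) UNIV = infsum (\<lambda>j. f j * unit_coeff m j) {m}"
    by (rule infsum_cong_neutral) (auto simp: unit_coeff_def)
  then show ?thesis
    by (simp add: unit_coeff_def)
qed

lemma eval_fun_unit_coeff: "eval_fun (\<lambda>j. a * unit_coeff m j) x = a * cis (inner_xk x m)"
  unfolding eval_fun_def using infsum_unit_coeff[of "\<lambda>j. a * cis (inner_xk x j)" m]
  by (simp add: mult_ac)

lemma pairing_unit_coeff: "pairing w (\<lambda>j. a * unit_coeff m j) = Re (a * w (kneg m))"
proof -
  have "infsum (\<lambda>j. w j * (a * unit_coeff m (kneg j))) UNIV = infsum (\<lambda>j. a * w j * unit_coeff (kneg m) j) UNIV"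
    by (rule infsum_cong) (auto simp: unit_coeff_def kneg_eq_swap)
  then show ?thesis
    unfolding pairing_def infsum_unit_coeff by simp
qed

definition real_monomial :: "complex \<Rightarrow> ('d::finite \<Rightarrow> int) \<Rightarrow> 'd fseq" where
  "real_monomial c k = (\<lambda>j. c * unit_coeff (kneg k) j + cnj c * unit_coeff k j)"

lemma real_monomial_in_Sspace: "real_monomial c k \<in> Sspace"
proof -
  have "rapidly_decaying (real_monomial c k)"
    unfolding real_monomial_def
    by (rule rapidly_decaying_finite_support[of "{k, kneg k}"]) (auto simp: unit_coeff_def)
  moreover have "hermitian (real_monomial c k)"
    unfolding real_monomial_def hermitian_def by (auto simp: unit_coeff_def kneg_eq_swap)
  ultimately show ?thesis
    unfolding Sspace_def by blast
qed

lemma sup_norm_real_monomial_le: "sup_norm (real_monomial c k) \<le> 2 * cmod c"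
proof (rule sup_norm_le)
  fix x
  have "eval_fun (real_monomial c k) x = c * cis (inner_xk x (kneg k)) + cnj c * cis (inner_xk x k)"
    unfolding real_monomial_def by (simp add: eval_fun_add rapidly_decaying_unit_coeff eval_fun_unit_coeff)
  then show "cmod (eval_fun (real_monomial c k) x) \<le> 2 * cmod c"
    using norm_triangle_ineq[of "c * cis (inner_xk x (kneg k))" "cnj c * cis (inner_xk x k)"]
    by (simp add: norm_mult)
qed

lemma pairing_real_monomial:
  assumes "slowly_growing w" "hermitian w"
  shows "pairing w (real_monomial c k) = 2 * Re (c * w k)"
proof -
  have "pairing w (real_monomial c k) = Re (c * w k) + Re (cnj c * w (kneg k))"
    unfolding real_monomial_def
    by (simp add: pairing_add_right assms(1) rapidly_decaying_unit_coeff pairing_unit_coeff)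
  moreover have "Re (cnj c * w (kneg k)) = Re (c * w k)"
    using assms(2) unfolding hermitian_def by simp
  ultimately show ?thesis
    by linarith
qed

definition const_one :: "'d::finite fseq" where
  "const_one = unit_coeff (\<lambda>_. 0)"

lemma const_one_in_Sspace: "const_one \<in> Sspace"
  using rapidly_decaying_unit_coeff[of 1]
  unfolding Sspace_def const_one_def hermitian_def unit_coeff_def kneg_def
  by (auto simp: fun_eq_iff)

lemma sup_norm_const_one: "sup_norm (const_one :: 'd::finite fseq) = 1"
proof -
  have "eval_fun (const_one :: 'd fseq) x = 1" for x
    using eval_fun_unit_coeff[of 1 "\<lambda>_. 0" x] unfolding const_one_def inner_xk_def by simp
  then show ?thesis
    unfolding sup_norm_def by simp
qed

section \<open>Periodic measures\<close>

lemma Mset_Sdual: "w \<in> Mset \<Longrightarrow> w \<in> Sdual"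
  unfolding Mset_def by blast

lemma Mset_slowly_growing: "w \<in> Mset \<Longrightarrow> slowly_growing w"
  using Mset_Sdual Sdual_slowly_growing by blast

lemma Mset_intro:
  assumes "w \<in> Sdual" "\<And>\<phi>. \<phi> \<in> Sspace \<Longrightarrow> pairing w \<phi> \<le> B * sup_norm \<phi>"
  shows "w \<in> Mset" "Mnorm w \<le> B"
proof -
  have bound: "x \<le> B" if "x \<in> {pairing w \<phi> |\<phi>. \<phi> \<in> Sspace \<and> sup_norm \<phi> = 1}" for x
  proof -
    from that obtain \<phi> where "x = pairing w \<phi>" "\<phi> \<in> Sspace" "sup_norm \<phi> = 1"
      by blast
    then show ?thesis
      using assms(2)[of \<phi>] by simp
  qed
  have "bdd_above {pairing w \<phi> |\<phi>. \<phi> \<in> Sspace \<and> sup_norm \<phi> = 1}"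
    by (rule bdd_aboveI) (rule bound)
  then show "w \<in> Mset"
    unfolding Mset_def using assms(1) by blast
  show "Mnorm w \<le> B"
    unfolding Mnorm_def using const_one_in_Sspace sup_norm_const_one
    by (intro cSup_least bound) auto
qed

lemma pairing_le_Mnorm_normalized:
  assumes "w \<in> Mset" "\<phi> \<in> Sspace" "sup_norm \<phi> = 1"
  shows "pairing w \<phi> \<le> Mnorm w"
  using assms unfolding Mnorm_def Mset_def by (intro cSup_upper) auto

lemma pairing_le_Mnorm:
  assumes w: "w \<in> Mset" and \<phi>: "\<phi> \<in> Sspace"
  shows "pairing w \<phi> \<le> Mnorm w * sup_norm \<phi>"
proof (cases "sup_norm \<phi> = 0")
  case True
  then have "\<phi> = (\<lambda>k. 0)"
    using norm_coeff_le_sup_norm[OF Sspace_rapidly_decaying[OF \<phi>]] by (auto simp: fun_eq_iff)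
  then show ?thesis
    by (simp add: pairing_def sup_norm_def eval_fun_def)
next
  case False
  define s where "s = sup_norm \<phi>"
  have "0 < s"
    using False sup_norm_nonneg[OF Sspace_rapidly_decaying[OF \<phi>]] unfolding s_def by simp
  have "sup_norm (\<lambda>k. of_real (1 / s) * \<phi> k) = 1"
    using sup_norm_scaleR[OF Sspace_rapidly_decaying[OF \<phi>], of "1 / s"] \<open>0 < s\<close> unfolding s_def by simp
  then have "pairing w (\<lambda>k. of_real (1 / s) * \<phi> k) \<le> Mnorm w"
    by (intro pairing_le_Mnorm_normalized w Sspace_scaleR \<phi>)
  then show ?thesis
    using \<open>0 < s\<close> unfolding pairing_scaleR_right s_def by (simp add: field_simps)
qed

lemma abs_pairing_le_Mnorm:
  assumes w: "w \<in> Mset" and \<phi>: "\<phi> \<in> Sspace"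
  shows "\<bar>pairing w \<phi>\<bar> \<le> Mnorm w * sup_norm \<phi>"
proof -
  have "- pairing w \<phi> \<le> Mnorm w * sup_norm \<phi>"
    using pairing_le_Mnorm[OF w Sspace_scaleR[OF \<phi>, of "-1"]]
      sup_norm_scaleR[OF Sspace_rapidly_decaying[OF \<phi>], of "-1"] pairing_scaleR_right[of w "-1" \<phi>]
    by simp
  then show ?thesis
    using pairing_le_Mnorm[OF w \<phi>] by linarith
qed

lemma Mnorm_nonneg: "w \<in> Mset \<Longrightarrow> 0 \<le> Mnorm w"
  using abs_pairing_le_Mnorm[OF _ const_one_in_Sspace] sup_norm_const_one
  by (metis abs_ge_zero mult.right_neutral order_trans)

lemma Mset_add:
  assumes "w1 \<in> Mset" "w2 \<in> Mset"
  shows "(\<lambda>k. w1 k + w2 k) \<in> Mset" "Mnorm (\<lambda>k. w1 k + w2 k) \<le> Mnorm w1 + Mnorm w2"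
proof -
  have "pairing (\<lambda>k. w1 k + w2 k) \<phi> \<le> (Mnorm w1 + Mnorm w2) * sup_norm \<phi>" if "\<phi> \<in> Sspace" for \<phi>
    using pairing_add_left[OF Mset_slowly_growing[OF assms(1)] Mset_slowly_growing[OF assms(2)]
        Sspace_rapidly_decaying[OF that]]
      pairing_le_Mnorm[OF assms(1) that] pairing_le_Mnorm[OF assms(2) that]
    by (simp add: distrib_right)
  then show "(\<lambda>k. w1 k + w2 k) \<in> Mset" "Mnorm (\<lambda>k. w1 k + w2 k) \<le> Mnorm w1 + Mnorm w2"
    using Mset_intro[OF Sdual_add[OF Mset_Sdual[OF assms(1)] Mset_Sdual[OF assms(2)]]] by auto
qed

lemma Mset_scaleR:
  assumes "w \<in> Mset"
  shows "(\<lambda>k. of_real c * w k) \<in> Mset" "Mnorm (\<lambda>k. of_real c * w k) \<le> \<bar>c\<bar> * Mnorm w"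
proof -
  have "pairing (\<lambda>k. of_real c * w k) \<phi> \<le> (\<bar>c\<bar> * Mnorm w) * sup_norm \<phi>" if "\<phi> \<in> Sspace" for \<phi>
  proof -
    have "pairing (\<lambda>k. of_real c * w k) \<phi> \<le> \<bar>c\<bar> * \<bar>pairing w \<phi>\<bar>"
      by (simp add: pairing_scaleR_left abs_mult[symmetric])
    also have "\<dots> \<le> \<bar>c\<bar> * (Mnorm w * sup_norm \<phi>)"
      by (intro mult_left_mono abs_pairing_le_Mnorm[OF assms that]) auto
    finally show ?thesis by simp
  qed
  then show "(\<lambda>k. of_real c * w k) \<in> Mset" "Mnorm (\<lambda>k. of_real c * w k) \<le> \<bar>c\<bar> * Mnorm w"
    using Mset_intro[OF Sdual_scaleR[OF Mset_Sdual[OF assms]]] by auto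
qed

lemma Mnorm_scaleR:
  assumes "w \<in> Mset"
  shows "Mnorm (\<lambda>k. of_real c * w k) = \<bar>c\<bar> * Mnorm w"
proof (cases "c = 0")
  case True
  then show ?thesis
    using Mset_scaleR[OF assms, of 0] Mnorm_nonneg[OF Mset_scaleR(1)[OF assms, of 0]] by simp
next
  case False
  have "Mnorm w = Mnorm (\<lambda>k. of_real (1 / c) * (of_real c * w k))"
    using False by simp
  also have "\<dots> \<le> \<bar>1 / c\<bar> * Mnorm (\<lambda>k. of_real c * w k)"
    by (rule Mset_scaleR(2)[OF Mset_scaleR(1)[OF assms]])
  finally have "\<bar>c\<bar> * Mnorm w \<le> Mnorm (\<lambda>k. of_real c * w k)"
    using False by (simp add: field_simps)
  then show ?thesis
    using Mset_scaleR(2)[OF assms, of c] by linarith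
qed

lemma Mset_diff: "w1 \<in> Mset \<Longrightarrow> w2 \<in> Mset \<Longrightarrow> (\<lambda>k. w1 k - w2 k) \<in> Mset"
  using Mset_add(1)[OF _ Mset_scaleR(1), of w1 w2 "-1"] by simp

lemma Mset_zero: "(\<lambda>k. 0) \<in> (Mset :: 'd::finite fseq set)"
  and Mnorm_zero: "Mnorm (\<lambda>k::'d\<Rightarrow>int. 0) = 0"
proof -
  have "pairing (\<lambda>k. 0) \<phi> \<le> 0 * sup_norm \<phi>" for \<phi> :: "'d fseq"
    by (simp add: pairing_def)
  then show "(\<lambda>k. 0) \<in> (Mset :: 'd fseq set)" "Mnorm (\<lambda>k::'d\<Rightarrow>int. 0) = 0"
    using Mset_intro[OF Sdual_zero, of 0] Mnorm_nonneg by force+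
qed

lemma norm_coeff_le_Mnorm:
  assumes w: "w \<in> Mset"
  shows "cmod (w k) \<le> Mnorm w"
proof (cases "w k = 0")
  case True
  then show ?thesis
    using Mnorm_nonneg[OF w] by simp
next
  case False
  define c where "c = cnj (w k) / of_real (cmod (w k))"
  have "cmod c = 1"
    unfolding c_def using False by (simp add: norm_divide)
  have "c * w k = of_real (cmod (w k))"
    unfolding c_def using False complex_norm_square[of "w k"]
    by (simp add: power2_eq_square field_simps)
  then have "2 * cmod (w k) = pairing w (real_monomial c k)"
    unfolding pairing_real_monomial[OF Mset_slowly_growing[OF w] Sdual_hermitian[OF Mset_Sdual[OF w]]] by simp
  also have "\<dots> \<le> Mnorm w * sup_norm (real_monomial c k)"
    by (rule pairing_le_Mnorm[OF w real_monomial_in_Sspace])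
  also have "\<dots> \<le> Mnorm w * 2"
    using sup_norm_real_monomial_le[of c k] \<open>cmod c = 1\<close> Mnorm_nonneg[OF w] by (intro mult_left_mono) auto
  finally show ?thesis
    by simp
qed

lemma Mnorm_eq_0_iff: "w \<in> Mset \<Longrightarrow> Mnorm w = 0 \<longleftrightarrow> w = (\<lambda>k. 0)"
  using norm_coeff_le_Mnorm Mnorm_zero by (fastforce simp: fun_eq_iff)

lemma Sspace_subset_Mset:
  assumes "v \<in> Sspace"
  shows "v \<in> Mset" "Mnorm v \<le> infsum (\<lambda>k. cmod (v k)) UNIV"
  using Mset_intro[OF subsetD[OF Sspace_subset_Sdual assms], of "infsum (\<lambda>k. cmod (v k)) UNIV"]
    abs_pairing_le_l1_sup_norm[OF Sspace_rapidly_decaying[OF assms] Sspace_rapidly_decaying]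
  by (meson abs_le_D1)+

lemma pairing_dirac_shift: "pairing (dirac_shift x) \<phi> = Re (eval_fun \<phi> x)"
proof -
  have "infsum (\<lambda>k. dirac_shift x k * \<phi> (kneg k)) UNIV
      = infsum (\<lambda>k. \<phi> (kneg k) * cis (inner_xk x (kneg k))) UNIV"
    unfolding dirac_shift_def inner_xk_def kneg_def by (rule infsum_cong) (simp add: sum_negf mult.commute)
  also have "\<dots> = infsum (\<lambda>j. \<phi> j * cis (inner_xk x j)) UNIV"
    by (rule infsum_reindex_bij_betw[OF bij_kneg])
  finally show ?thesis
    unfolding pairing_def eval_fun_def by simp
qed

lemma dirac_shift_in_Mset: "dirac_shift x \<in> Mset"
proof -
  have "dirac_shift x \<in> Sdual"
    unfolding Sdual_def dirac_shift_def hermitian_def inner_xk_def kneg_def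
    by (auto intro!: slowly_growing_bounded[of _ 1] simp: sum_negf cis_cnj)
  moreover have "pairing (dirac_shift x) \<phi> \<le> 1 * sup_norm \<phi>" if "\<phi> \<in> Sspace" for \<phi>
    unfolding pairing_dirac_shift
    using complex_Re_le_cmod norm_eval_fun_le_sup_norm[OF Sspace_rapidly_decaying[OF that]]
    by (metis mult_1 order_trans)
  ultimately show ?thesis
    by (rule Mset_intro)
qed

lemma sum_dirac_shift_in_Mset:
  fixes K :: nat and x :: "nat \<Rightarrow> 'd::finite \<Rightarrow> real"
  shows "(\<lambda>k. \<Sum>i<K. of_real (a i) * dirac_shift (x i) k) \<in> Mset"
proof (induction K)
  case 0
  then show ?case using Mset_zero by simp
next
  case (Suc K)
  then show ?case
    using Mset_add(1)[OF Suc Mset_scaleR(1)[OF dirac_shift_in_Mset]] by simp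
qed

section \<open>The \<open>\<ell>\<^sup>p\<close> norm of a pair of reals\<close>

definition pnorm2 :: "real \<Rightarrow> real \<Rightarrow> real \<Rightarrow> real" where
  "pnorm2 r a b = (a powr r + b powr r) powr (1 / r)"

definition pnorm2_ext :: "ereal \<Rightarrow> real \<Rightarrow> real \<Rightarrow> real" where
  "pnorm2_ext p a b = (if p = \<infinity> then max a b else pnorm2 (real_of_ereal p) a b)"

lemma powr_convex_nonneg:
  fixes r x y t :: real
  assumes "1 \<le> r" "0 \<le> x" "0 \<le> y" "0 \<le> t" "t \<le> 1"
  shows "(t * x + (1 - t) * y) powr r \<le> t * x powr r + (1 - t) * y powr r"
proof -
  have shrink: "(s * z) powr r \<le> s * z powr r" if "0 \<le> s" "s \<le> 1" "0 \<le> z" for s z :: real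
    using that assms(1) powr_le_one_le[of s r]
    by (cases "s = 0") (auto simp: powr_mult intro: mult_right_mono)
  show ?thesis
  proof (cases "x = 0 \<or> y = 0")
    case True
    then show ?thesis
      using shrink[of t x] shrink[of "1 - t" y] assms by auto
  next
    case False
    then have "x \<in> {0<..}" "y \<in> {0<..}"
      using assms by auto
    then show ?thesis
      using convex_onD[OF powr_convex[OF assms(1)], of t y x] assms by (simp add: add.commute)
  qed
qed

context
  fixes r :: real
  assumes r: "1 \<le> r"
begin

lemma pnorm2_nonneg: "0 \<le> pnorm2 r a b"
  unfolding pnorm2_def by simp

lemma pnorm2_powr: "0 \<le> a \<Longrightarrow> 0 \<le> b \<Longrightarrow> pnorm2 r a b powr r = a powr r + b powr r"
  unfolding pnorm2_def using r by (simp add: powr_powr)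

lemma pnorm2_zero_right [simp]: "0 \<le> a \<Longrightarrow> pnorm2 r a 0 = a"
  and pnorm2_zero_left [simp]: "0 \<le> b \<Longrightarrow> pnorm2 r 0 b = b"
  unfolding pnorm2_def using r by (simp_all add: powr_powr)

lemma pnorm2_ge_max:
  assumes "0 \<le> a" "0 \<le> b"
  shows "max a b \<le> pnorm2 r a b"
proof -
  have "a = (a powr r) powr (1 / r)" "b = (b powr r) powr (1 / r)"
    using r assms by (simp_all add: powr_powr)
  moreover have "(a powr r) powr (1 / r) \<le> pnorm2 r a b" "(b powr r) powr (1 / r) \<le> pnorm2 r a b"
    unfolding pnorm2_def using r by (auto intro!: powr_mono2)
  ultimately show ?thesis
    by simp
qed

lemma pnorm2_mono:
  "0 \<le> a \<Longrightarrow> 0 \<le> b \<Longrightarrow> a \<le> a' \<Longrightarrow> b \<le> b' \<Longrightarrow> pnorm2 r a b \<le> pnorm2 r a' b'"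
  unfolding pnorm2_def using r by (intro powr_mono2 add_mono) auto

lemma pnorm2_scale:
  assumes "0 \<le> c" "0 \<le> a" "0 \<le> b"
  shows "pnorm2 r (c * a) (c * b) = c * pnorm2 r a b"
proof -
  have "(c * a) powr r + (c * b) powr r = c powr r * (a powr r + b powr r)"
    using assms by (simp add: powr_mult distrib_left)
  moreover have "(c powr r) powr (1 / r) = c"
    using assms r by (simp add: powr_powr)
  ultimately show ?thesis
    unfolding pnorm2_def using assms by (simp add: powr_mult)
qed

text \<open>Minkowski's inequality for pairs: after scaling by \<open>A + B\<close> the left-hand side becomes a
  convex combination of two points of the unit sphere.\<close>

lemma powr_add_pair_le:
  assumes "0 \<le> a1" "0 \<le> b1" "0 \<le> a2" "0 \<le> b2" "0 < A" "0 < B"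
    and "a1 powr r + b1 powr r = A powr r" "a2 powr r + b2 powr r = B powr r"
  shows "(a1 + a2) powr r + (b1 + b2) powr r \<le> (A + B) powr r"
proof -
  define t where "t = A / (A + B)"
  have "0 \<le> t" "t \<le> 1" "1 - t = B / (A + B)"
    using assms(5,6) unfolding t_def by (auto simp: field_simps)
  have "t * (z / A) = z / (A + B)" "(1 - t) * (z / B) = z / (A + B)" for z
    using assms(5,6) unfolding \<open>1 - t = B / (A + B)\<close> unfolding t_def by simp_all
  then have split: "(z1 + z2) / (A + B) = t * (z1 / A) + (1 - t) * (z2 / B)" for z1 z2
    by (simp add: add_divide_distrib)
  have unit: "(a1 / A) powr r + (b1 / A) powr r = 1" "(a2 / B) powr r + (b2 / B) powr r = 1"
    using assms by (simp_all add: powr_divide add_divide_distrib[symmetric])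
  have "((a1 + a2) / (A + B)) powr r + ((b1 + b2) / (A + B)) powr r
      \<le> (t * (a1 / A) powr r + (1 - t) * (a2 / B) powr r) + (t * (b1 / A) powr r + (1 - t) * (b2 / B) powr r)"
    unfolding split using assms \<open>0 \<le> t\<close> \<open>t \<le> 1\<close>
    by (intro add_mono powr_convex_nonneg[OF r]) auto
  also have "\<dots> = t * ((a1 / A) powr r + (b1 / A) powr r) + (1 - t) * ((a2 / B) powr r + (b2 / B) powr r)"
    by (simp add: algebra_simps)
  also have "\<dots> = 1"
    unfolding unit by simp
  finally show ?thesis
    using assms by (simp add: powr_divide add_divide_distrib[symmetric] divide_le_eq)
qed

lemma pnorm2_triangle:
  assumes "0 \<le> a1" "0 \<le> b1" "0 \<le> a2" "0 \<le> b2"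
  shows "pnorm2 r (a1 + a2) (b1 + b2) \<le> pnorm2 r a1 b1 + pnorm2 r a2 b2"
proof -
  define A B where "A = pnorm2 r a1 b1" and "B = pnorm2 r a2 b2"
  consider "A = 0" | "B = 0" | "0 < A" "0 < B"
    using pnorm2_nonneg[of a1 b1] pnorm2_nonneg[of a2 b2] unfolding A_def B_def by (metis le_less)
  then show ?thesis
  proof cases
    case 1
    then have "a1 = 0" "b1 = 0"
      using pnorm2_ge_max[of a1 b1] assms unfolding A_def by auto
    then show ?thesis by (simp add: pnorm2_nonneg)
  next
    case 2
    then have "a2 = 0" "b2 = 0"
      using pnorm2_ge_max[of a2 b2] assms unfolding B_def by auto
    then show ?thesis by (simp add: pnorm2_nonneg)
  next
    case 3
    have "(a1 + a2) powr r + (b1 + b2) powr r \<le> (A + B) powr r"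
      using powr_add_pair_le[OF assms 3] pnorm2_powr[OF assms(1,2)] pnorm2_powr[OF assms(3,4)]
      unfolding A_def B_def by simp
    then have "pnorm2 r (a1 + a2) (b1 + b2) \<le> ((A + B) powr r) powr (1 / r)"
      unfolding pnorm2_def using r by (intro powr_mono2) auto
    also have "\<dots> = A + B"
      using r 3 by (simp add: powr_powr)
    finally show ?thesis
      unfolding A_def B_def .
  qed
qed

lemma pnorm2_le_add:
  assumes "0 \<le> a" "0 \<le> b"
  shows "pnorm2 r a b \<le> a + b"
  using pnorm2_triangle[of a 0 0 b] assms by simp

end

context
  fixes p :: ereal
  assumes p: "1 \<le> p"
begin

lemma pnorm2_ext_cases:
  obtains "pnorm2_ext p = max" | r where "1 \<le> r" "pnorm2_ext p = pnorm2 r"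
  using p by (cases p) (auto simp: pnorm2_ext_def[abs_def])

lemma pnorm2_ext_ge_max:
  assumes "0 \<le> a" "0 \<le> b"
  shows "max a b \<le> pnorm2_ext p a b"
proof (cases rule: pnorm2_ext_cases)
  case (2 r)
  then show ?thesis
    using pnorm2_ge_max[of r a b] assms by simp
qed simp

lemma pnorm2_ext_le_add: "0 \<le> a \<Longrightarrow> 0 \<le> b \<Longrightarrow> pnorm2_ext p a b \<le> a + b"
  by (cases rule: pnorm2_ext_cases) (auto simp: pnorm2_le_add)

lemma pnorm2_ext_mono:
  "0 \<le> a \<Longrightarrow> 0 \<le> b \<Longrightarrow> a \<le> a' \<Longrightarrow> b \<le> b' \<Longrightarrow> pnorm2_ext p a b \<le> pnorm2_ext p a' b'"
  by (cases rule: pnorm2_ext_cases) (auto simp: pnorm2_mono)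

lemma pnorm2_ext_scale:
  "0 \<le> c \<Longrightarrow> 0 \<le> a \<Longrightarrow> 0 \<le> b \<Longrightarrow> pnorm2_ext p (c * a) (c * b) = c * pnorm2_ext p a b"
  by (cases rule: pnorm2_ext_cases) (auto simp: pnorm2_scale max_mult_distrib_left)

lemma pnorm2_ext_triangle:
  "0 \<le> a1 \<Longrightarrow> 0 \<le> b1 \<Longrightarrow> 0 \<le> a2 \<Longrightarrow> 0 \<le> b2 \<Longrightarrow>
    pnorm2_ext p (a1 + a2) (b1 + b2) \<le> pnorm2_ext p a1 b1 + pnorm2_ext p a2 b2"
  by (cases rule: pnorm2_ext_cases) (auto simp: pnorm2_triangle)

end

section \<open>Spline-admissible operators and their native spaces\<close>

lemma native_norm_eq_pnorm2_ext:
  "native_norm L p f = pnorm2_ext p (Mnorm (apply_op L f)) (l2norm (proj_null L f))"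
  by (simp add: native_norm_def pnorm2_ext_def pnorm2_def)

locale spline_admissible_op =
  fixes L :: "'d::finite fseq"
  assumes admissible: "spline_admissible L"
begin

lemma L_in_LSI: "L \<in> LSI"
  and finite_zeros: "finite {k. L k = 0}"
  using admissible unfolding spline_admissible_def by blast+

lemma slowly_growing_L: "slowly_growing L"
  using L_in_LSI unfolding LSI_def by blast

text \<open>On multipliers the Penrose equations \<open>LML = L\<close>, \<open>MLM = M\<close> already force \<open>M = pinv L\<close>.\<close>

lemma pinv_in_LSI: "pinv L \<in> LSI"
proof -
  obtain M where M: "is_pseudoinverse L M"
    using admissible unfolding spline_admissible_def by blast
  have "M k = pinv L k" for k
  proof -
    have "L k * (M k * L k) = L k" "M k * (L k * M k) = M k"
      using M unfolding is_pseudoinverse_def comp_op_def by (metis (no_types, lifting))+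
    then show ?thesis
      unfolding pinv_def by (cases "L k = 0") (auto simp: field_simps)
  qed
  then show ?thesis
    using M unfolding is_pseudoinverse_def by (metis ext)
qed

lemma slowly_growing_pinv: "slowly_growing (pinv L)"
  using pinv_in_LSI unfolding LSI_def by blast

lemma pinv_apply_plus_proj: "(\<lambda>k. apply_op (pinv L) (apply_op L f) k + proj_null L f k) = f"
  by (auto simp: apply_op_def proj_null_def pinv_def)

lemma l2norm_proj_null: "l2norm (proj_null L f) = L2_set (\<lambda>k. cmod (f k)) {k. L k = 0}"
proof -
  have "infsum (\<lambda>k. (cmod (proj_null L f k))\<^sup>2) UNIV = infsum (\<lambda>k. (cmod (f k))\<^sup>2) {k. L k = 0}"
    by (rule infsum_cong_neutral) (auto simp: proj_null_def)
  then show ?thesis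
    using finite_zeros unfolding l2norm_def L2_set_def by simp
qed

lemma l2norm_proj_null_nonneg: "0 \<le> l2norm (proj_null L f)"
  unfolding l2norm_proj_null by simp

lemma norm_coeff_le_l2norm_proj_null: "L k = 0 \<Longrightarrow> cmod (f k) \<le> l2norm (proj_null L f)"
  unfolding l2norm_proj_null by (rule member_le_L2_set[OF finite_zeros]) simp

lemma l2norm_proj_null_le_sum: "l2norm (proj_null L f) \<le> (\<Sum>k\<in>{k. L k = 0}. cmod (f k))"
  unfolding l2norm_proj_null by (rule L2_set_le_sum) simp

lemma l2norm_proj_null_add:
  "l2norm (proj_null L (\<lambda>k. f k + g k)) \<le> l2norm (proj_null L f) + l2norm (proj_null L g)"
  unfolding l2norm_proj_null
  by (rule order_trans[OF L2_set_mono L2_set_triangle_ineq]) (auto intro: norm_triangle_ineq)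

lemma l2norm_proj_null_scaleR:
  "l2norm (proj_null L (\<lambda>k. of_real c * f k)) = \<bar>c\<bar> * l2norm (proj_null L f)"
  unfolding l2norm_proj_null by (simp add: norm_mult L2_set_right_distrib)

lemma l2norm_proj_null_eq_0_iff: "l2norm (proj_null L f) = 0 \<longleftrightarrow> (\<forall>k. L k = 0 \<longrightarrow> f k = 0)"
  unfolding l2norm_proj_null using finite_zeros by (simp add: L2_set_eq_0_iff)

lemma rapidly_decaying_proj_null: "rapidly_decaying (proj_null L f)"
  by (rule rapidly_decaying_finite_support[OF finite_zeros]) (simp add: proj_null_def)

lemma proj_null_in_Sspace: "hermitian f \<Longrightarrow> proj_null L f \<in> Sspace"
  using L_in_LSI finite_zeros
  unfolding Sspace_def LSI_def hermitian_def proj_null_def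
  by (auto intro: rapidly_decaying_finite_support)

lemma apply_op_add: "apply_op L (\<lambda>k. f k + g k) = (\<lambda>k. apply_op L f k + apply_op L g k)"
  and apply_op_diff: "apply_op L (\<lambda>k. f k - g k) = (\<lambda>k. apply_op L f k - apply_op L g k)"
  and apply_op_scaleR: "apply_op L (\<lambda>k. of_real c * f k) = (\<lambda>k. of_real c * apply_op L f k)"
  and apply_op_zero: "apply_op L (\<lambda>k. 0) = (\<lambda>k. 0)"
  unfolding apply_op_def by (simp_all add: algebra_simps)

lemma native_space_Sdual: "f \<in> native_space L \<Longrightarrow> f \<in> Sdual"
  and native_space_Mset: "f \<in> native_space L \<Longrightarrow> apply_op L f \<in> Mset"
  unfolding native_space_def by blast+

lemma native_space_add: "f \<in> native_space L \<Longrightarrow> g \<in> native_space L \<Longrightarrow> (\<lambda>k. f k + g k) \<in> native_space L"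
  and native_space_diff: "f \<in> native_space L \<Longrightarrow> g \<in> native_space L \<Longrightarrow> (\<lambda>k. f k - g k) \<in> native_space L"
  and native_space_scaleR: "f \<in> native_space L \<Longrightarrow> (\<lambda>k. of_real c * f k) \<in> native_space L"
  and native_space_zero: "(\<lambda>k. 0) \<in> native_space L"
  unfolding native_space_def
  by (auto simp: apply_op_add apply_op_diff apply_op_scaleR apply_op_zero
           intro: Sdual_add Sdual_diff Sdual_scaleR Sdual_zero Mset_add Mset_diff Mset_scaleR Mset_zero)

lemma native_space_decomposition:
  "native_space L = {(\<lambda>k. apply_op (pinv L) w k + n k) |w n. w \<in> Mset \<and> n \<in> null_space L}"
proof (intro equalityI subsetI)
  fix f assume f: "f \<in> native_space L"
  have "proj_null L f \<in> null_space L"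
    using proj_null_in_Sspace[OF Sdual_hermitian[OF native_space_Sdual[OF f]]] Sspace_subset_Sdual
    unfolding null_space_def by (auto simp: apply_op_def proj_null_def)
  then show "f \<in> {(\<lambda>k. apply_op (pinv L) w k + n k) |w n. w \<in> Mset \<and> n \<in> null_space L}"
    using native_space_Mset[OF f] pinv_apply_plus_proj[of f]
    by (intro CollectI exI[of _ "apply_op L f"] exI[of _ "proj_null L f"]) auto
next
  fix g assume "g \<in> {(\<lambda>k. apply_op (pinv L) w k + n k) |w n. w \<in> Mset \<and> n \<in> null_space L}"
  then obtain w n where g: "g = (\<lambda>k. apply_op (pinv L) w k + n k)" and w: "w \<in> Mset" and n: "n \<in> null_space L"
    by blast
  have "n \<in> Sdual" "\<And>k. L k * n k = 0"
    using n unfolding null_space_def apply_op_def by (auto simp: fun_eq_iff)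
  then have "g \<in> Sdual"
    using Sdual_add[OF Sdual_mult[OF pinv_in_LSI Mset_Sdual[OF w]]] unfolding g apply_op_def by blast
  moreover have "apply_op L g = (\<lambda>k. w k - proj_null L w k)"
    unfolding g apply_op_def proj_null_def pinv_def using \<open>\<And>k. L k * n k = 0\<close>
    by (auto simp: fun_eq_iff distrib_left)
  moreover have "(\<lambda>k. w k - proj_null L w k) \<in> Mset"
    using Mset_diff[OF w Sspace_subset_Mset(1)[OF proj_null_in_Sspace[OF Sdual_hermitian[OF Mset_Sdual[OF w]]]]] .
  ultimately show "g \<in> native_space L"
    unfolding native_space_def by simp
qed

lemma range_pinv_inter_null_space: "{apply_op (pinv L) w |w. w \<in> Mset} \<inter> null_space L = {(\<lambda>k. 0)}"
proof (intro equalityI subsetI)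
  fix g assume "g \<in> {apply_op (pinv L) w |w. w \<in> Mset} \<inter> null_space L"
  then obtain w where g: "g = apply_op (pinv L) w" and "(\<lambda>k. L k * g k) = (\<lambda>k. 0)"
    unfolding null_space_def apply_op_def by blast
  then have Lg: "L k * g k = 0" for k
    using fun_cong[of _ _ k] by metis
  have "g k = 0" for k
    using Lg[of k] unfolding g by (cases "L k = 0") (auto simp: apply_op_def pinv_def)
  then show "g \<in> {(\<lambda>k. 0)}"
    by auto
next
  fix g :: "'d fseq" assume "g \<in> {(\<lambda>k. 0)}"
  then show "g \<in> {apply_op (pinv L) w |w. w \<in> Mset} \<inter> null_space L"
    using Mset_zero Sdual_zero unfolding null_space_def apply_op_def
    by (auto intro!: exI[of _ "\<lambda>k. 0"])
qed

lemma Sspace_subset_native_space: "Sspace \<subseteq> native_space L"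
  using Sspace_subset_Sdual Sspace_subset_Mset(1)[OF Sspace_mult[OF L_in_LSI]]
  unfolding native_space_def apply_op_def by blast

lemma periodic_spline_in_native_space: "is_periodic_spline L f \<Longrightarrow> f \<in> native_space L"
  unfolding is_periodic_spline_def native_space_def using sum_dirac_shift_in_Mset by auto

definition coeff_weight :: "('d \<Rightarrow> int) \<Rightarrow> real" where
  "coeff_weight k = 1 + cmod (pinv L k)"

lemma coeff_weight_ge_1: "1 \<le> coeff_weight k"
  by (simp add: coeff_weight_def)

lemma slowly_growing_coeff_weight: "slowly_growing (\<lambda>k. of_real (coeff_weight k))"
  unfolding coeff_weight_def of_real_add
  by (intro slowly_growing_add slowly_growing_const slowly_growing_norm slowly_growing_pinv)

end

locale native_norm_exponent = spline_admissible_op +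
  fixes p :: ereal
  assumes one_le_p: "1 \<le> p"
begin

lemma native_norm_bounds:
  assumes "f \<in> native_space L"
  shows "max (Mnorm (apply_op L f)) (l2norm (proj_null L f)) \<le> native_norm L p f"
    and "native_norm L p f \<le> Mnorm (apply_op L f) + l2norm (proj_null L f)"
  unfolding native_norm_eq_pnorm2_ext
  using pnorm2_ext_ge_max[OF one_le_p] pnorm2_ext_le_add[OF one_le_p]
    Mnorm_nonneg[OF native_space_Mset[OF assms]] l2norm_proj_null_nonneg
  by blast+

lemma Mnorm_le_native_norm: "f \<in> native_space L \<Longrightarrow> Mnorm (apply_op L f) \<le> native_norm L p f"
  and l2norm_le_native_norm: "f \<in> native_space L \<Longrightarrow> l2norm (proj_null L f) \<le> native_norm L p f"
  using native_norm_bounds(1) by fastforce+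

lemma native_norm_nonneg: "f \<in> native_space L \<Longrightarrow> 0 \<le> native_norm L p f"
  using Mnorm_le_native_norm[of f] Mnorm_nonneg[OF native_space_Mset, of f] by linarith

lemma native_norm_eq_0_iff:
  assumes f: "f \<in> native_space L"
  shows "native_norm L p f = 0 \<longleftrightarrow> f = (\<lambda>k. 0)"
proof
  assume "native_norm L p f = 0"
  then have "Mnorm (apply_op L f) = 0" "l2norm (proj_null L f) = 0"
    using Mnorm_le_native_norm[OF f] l2norm_le_native_norm[OF f]
      Mnorm_nonneg[OF native_space_Mset[OF f]] l2norm_proj_null_nonneg[of f] by linarith+
  then have "L k * f k = 0" "L k = 0 \<Longrightarrow> f k = 0" for k
    using Mnorm_eq_0_iff[OF native_space_Mset[OF f]] l2norm_proj_null_eq_0_iff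
    by (auto simp: apply_op_def fun_eq_iff)
  then show "f = (\<lambda>k. 0)"
    by (metis mult_eq_0_iff)
next
  assume "f = (\<lambda>k. 0)"
  then have "native_norm L p f \<le> 0"
    using native_norm_bounds(2)[OF f] l2norm_proj_null_eq_0_iff[of f]
    by (simp add: apply_op_zero Mnorm_zero)
  then show "native_norm L p f = 0"
    using native_norm_nonneg[OF f] by linarith
qed

lemma native_norm_scaleR:
  assumes "f \<in> native_space L"
  shows "native_norm L p (\<lambda>k. of_real c * f k) = \<bar>c\<bar> * native_norm L p f"
  using pnorm2_ext_scale[OF one_le_p abs_ge_zero Mnorm_nonneg[OF native_space_Mset[OF assms]]
      l2norm_proj_null_nonneg]
  unfolding native_norm_eq_pnorm2_ext apply_op_scaleR Mnorm_scaleR[OF native_space_Mset[OF assms]]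
    l2norm_proj_null_scaleR .

lemma native_norm_triangle:
  assumes f: "f \<in> native_space L" and g: "g \<in> native_space L"
  shows "native_norm L p (\<lambda>k. f k + g k) \<le> native_norm L p f + native_norm L p g"
proof -
  have "native_norm L p (\<lambda>k. f k + g k)
      \<le> pnorm2_ext p (Mnorm (apply_op L f) + Mnorm (apply_op L g))
                     (l2norm (proj_null L f) + l2norm (proj_null L g))"
    unfolding native_norm_eq_pnorm2_ext
    by (intro pnorm2_ext_mono[OF one_le_p] Mnorm_nonneg native_space_Mset native_space_add f g
          l2norm_proj_null_nonneg l2norm_proj_null_add)
       (simp add: apply_op_add Mset_add(2)[OF native_space_Mset[OF f] native_space_Mset[OF g]])
  also have "\<dots> \<le> native_norm L p f + native_norm L p g"
    unfolding native_norm_eq_pnorm2_ext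
    by (intro pnorm2_ext_triangle[OF one_le_p] Mnorm_nonneg native_space_Mset f g l2norm_proj_null_nonneg)
  finally show ?thesis .
qed

text \<open>Since a sum of two nonnegative reals is at most twice their maximum,
  \<open>native_norm_bounds\<close> gives the same constants \<open>1/2\<close> and \<open>2\<close> for all exponents.\<close>

lemma native_norms_equivalent:
  assumes "1 \<le> q"
  shows "\<exists>C1>0. \<exists>C2>0. \<forall>f\<in>native_space L.
           C1 * native_norm L p f \<le> native_norm L q f \<and> native_norm L q f \<le> C2 * native_norm L p f"
proof -
  interpret q: native_norm_exponent L q
    using admissible assms by unfold_locales
  have "1/2 * native_norm L p f \<le> native_norm L q f \<and> native_norm L q f \<le> 2 * native_norm L p f"
    if f: "f \<in> native_space L" for f
    using native_norm_bounds[OF f] q.native_norm_bounds[OF f]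
      Mnorm_nonneg[OF native_space_Mset[OF f]] l2norm_proj_null_nonneg[of f]
    by (simp add: max_def split: if_splits)
  then show ?thesis
    by (intro exI[of _ "1/2"] conjI exI[of _ 2]) auto
qed

lemma norm_coeff_le_native_norm:
  assumes f: "f \<in> native_space L"
  shows "cmod (f k) \<le> coeff_weight k * native_norm L p f"
proof -
  have weight: "native_norm L p f \<le> coeff_weight k * native_norm L p f"
    using mult_right_mono[OF coeff_weight_ge_1 native_norm_nonneg[OF f], of k] by simp
  have zero: "cmod (f k) \<le> native_norm L p f" if "L k = 0"
    using norm_coeff_le_l2norm_proj_null[OF that, of f] l2norm_le_native_norm[OF f] by linarith
  have nonzero: "cmod (f k) \<le> coeff_weight k * native_norm L p f" if "L k \<noteq> 0"
  proof -
    have "cmod (L k * f k) \<le> native_norm L p f"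
      using norm_coeff_le_Mnorm[OF native_space_Mset[OF f], of k] Mnorm_le_native_norm[OF f]
      unfolding apply_op_def by linarith
    then have "cmod (pinv L k) * cmod (L k * f k) \<le> cmod (pinv L k) * native_norm L p f"
      by (simp add: mult_left_mono)
    moreover have "cmod (f k) = cmod (pinv L k) * cmod (L k * f k)"
      using that by (simp add: pinv_def norm_mult norm_divide)
    ultimately show ?thesis
      using native_norm_nonneg[OF f] unfolding coeff_weight_def by (simp add: distrib_right)
  qed
  show ?thesis
    using weight zero nonzero by (cases "L k = 0") auto
qed

end

section \<open>Completeness of the native space\<close>

lemma abs_pairing_le_weighted:
  fixes g :: "'d::finite fseq"
  assumes "slowly_growing H" "rapidly_decaying \<phi>" "slowly_growing g"
    and bound: "\<And>k. cmod (g k) \<le> cmod (H k) * \<delta>"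
  shows "\<bar>pairing g \<phi>\<bar> \<le> \<delta> * infsum (\<lambda>k. cmod (H k * \<phi> (kneg k))) UNIV"
proof -
  have "\<bar>pairing g \<phi>\<bar> \<le> infsum (\<lambda>k. cmod (g k * \<phi> (kneg k))) UNIV"
    by (rule abs_pairing_le[OF assms(3,2)])
  also have "\<dots> \<le> infsum (\<lambda>k. \<delta> * cmod (H k * \<phi> (kneg k))) UNIV"
  proof (intro infsum_mono abs_summable_pairing_terms assms summable_on_cmult_right)
    fix k
    have "cmod (g k) * cmod (\<phi> (kneg k)) \<le> cmod (H k) * \<delta> * cmod (\<phi> (kneg k))"
      by (intro mult_right_mono bound) simp
    then show "cmod (g k * \<phi> (kneg k)) \<le> \<delta> * cmod (H k * \<phi> (kneg k))"
      by (simp add: norm_mult mult_ac)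
  qed
  finally show ?thesis
    by (simp add: infsum_cmult_right')
qed

context native_norm_exponent
begin

lemma norm_coeff_diff_le_Cauchy_bound:
  assumes s: "\<And>n. s n \<in> native_space L"
    and N: "\<forall>m\<ge>N. \<forall>n\<ge>N. native_norm L p (\<lambda>k. s m k - s n k) < e" and "N \<le> m" "N \<le> n"
  shows "cmod (s m k - s n k) \<le> coeff_weight k * e"
proof -
  have "coeff_weight k * native_norm L p (\<lambda>k. s m k - s n k) \<le> coeff_weight k * e"
    using N[rule_format, OF assms(3,4)] coeff_weight_ge_1[of k] by (intro mult_left_mono) auto
  then show ?thesis
    using norm_coeff_le_native_norm[OF native_space_diff[OF s[of m] s[of n]], of k] by linarith
qed

lemma Cauchy_native_coeff_limit:
  assumes s: "\<And>n. s n \<in> native_space L"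
    and cauchy: "\<And>e. 0 < e \<Longrightarrow> \<exists>N. \<forall>m\<ge>N. \<forall>n\<ge>N. native_norm L p (\<lambda>k. s m k - s n k) < e"
  obtains f where "\<And>k. (\<lambda>n. s n k) \<longlonglongrightarrow> f k"
    and "\<And>e N n k. \<forall>m\<ge>N. \<forall>n\<ge>N. native_norm L p (\<lambda>k. s m k - s n k) < e \<Longrightarrow> N \<le> n \<Longrightarrow>
           cmod (s n k - f k) \<le> coeff_weight k * e"
proof -
  have "Cauchy (\<lambda>n. s n k)" for k
  proof (rule CauchyI)
    fix \<epsilon> :: real assume "0 < \<epsilon>"
    define e where "e = \<epsilon> / (2 * coeff_weight k)"
    have "0 < coeff_weight k"
      using coeff_weight_ge_1[of k] by linarith
    with \<open>0 < \<epsilon>\<close> have "0 < e" "coeff_weight k * e < \<epsilon>"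
      unfolding e_def by (auto simp: field_simps)
    then obtain N where N: "\<forall>m\<ge>N. \<forall>n\<ge>N. native_norm L p (\<lambda>k. s m k - s n k) < e"
      using cauchy by blast
    have "norm (s m k - s n k) < \<epsilon>" if "N \<le> m" "N \<le> n" for m n
      using norm_coeff_diff_le_Cauchy_bound[OF s N that, of k] \<open>coeff_weight k * e < \<epsilon>\<close> by simp
    then show "\<exists>M. \<forall>m\<ge>M. \<forall>n\<ge>M. norm (s m k - s n k) < \<epsilon>"
      by blast
  qed
  then have conv: "(\<lambda>n. s n k) \<longlonglongrightarrow> lim (\<lambda>n. s n k)" for k
    by (simp add: Cauchy_convergent_iff convergent_LIMSEQ_iff)
  define f where "f k = lim (\<lambda>n. s n k)" for k
  have "cmod (s n k - f k) \<le> coeff_weight k * e"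
    if N: "\<forall>m\<ge>N. \<forall>n\<ge>N. native_norm L p (\<lambda>k. s m k - s n k) < e" and "N \<le> n" for e N n k
  proof (rule LIMSEQ_le_const2)
    show "(\<lambda>m. cmod (s n k - s m k)) \<longlonglongrightarrow> cmod (s n k - f k)"
      unfolding f_def by (intro tendsto_norm tendsto_diff tendsto_const conv)
    show "\<exists>N. \<forall>m\<ge>N. cmod (s n k - s m k) \<le> coeff_weight k * e"
      using norm_coeff_diff_le_Cauchy_bound[OF s N \<open>N \<le> n\<close>] by blast
  qed
  with conv show ?thesis
    unfolding f_def[symmetric] by (rule that)
qed

context
  fixes s f
  assumes s: "\<And>n. s n \<in> native_space L"
    and cauchy: "\<And>e. 0 < e \<Longrightarrow> \<exists>N. \<forall>m\<ge>N. \<forall>n\<ge>N. native_norm L p (\<lambda>k. s m k - s n k) < e"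
    and conv: "\<And>k. (\<lambda>n. s n k) \<longlonglongrightarrow> f k"
    and tail: "\<And>e N n k. \<forall>m\<ge>N. \<forall>n\<ge>N. native_norm L p (\<lambda>k. s m k - s n k) < e \<Longrightarrow> N \<le> n \<Longrightarrow>
                 cmod (s n k - f k) \<le> coeff_weight k * e"
begin

lemma Cauchy_limit_in_Sdual: "f \<in> Sdual"
proof -
  obtain N where N: "\<forall>m\<ge>N. \<forall>n\<ge>N. native_norm L p (\<lambda>k. s m k - s n k) < 1"
    using cauchy[of 1] by auto
  have "cmod (of_real (cmod (s N k)) + of_real (coeff_weight k)) = cmod (s N k) + coeff_weight k" for k
    unfolding of_real_add[symmetric] norm_of_real using coeff_weight_ge_1[of k] by simp
  then have "cmod (f k) \<le> cmod (of_real (cmod (s N k)) + of_real (coeff_weight k))" for k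
    using tail[OF N order_refl, of k] norm_triangle_ineq4[of "s N k" "s N k - f k"] by simp
  moreover have "slowly_growing (\<lambda>k. of_real (cmod (s N k)) + of_real (coeff_weight k))"
    by (intro slowly_growing_add slowly_growing_norm Sdual_slowly_growing native_space_Sdual s
          slowly_growing_coeff_weight)
  ultimately have "slowly_growing f"
    using slowly_growing_dominated by blast
  moreover have "hermitian f"
    unfolding hermitian_def
  proof
    fix k
    have "(\<lambda>n. s n (kneg k)) = (\<lambda>n. cnj (s n k))"
      using Sdual_hermitian[OF native_space_Sdual[OF s]] unfolding hermitian_def by auto
    then have "(\<lambda>n. cnj (s n k)) \<longlonglongrightarrow> f (kneg k)"
      using conv[of "kneg k"] by simp
    then show "f (kneg k) = cnj (f k)"
      using tendsto_cnj[OF conv[of k]] by (rule LIMSEQ_unique)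
  qed
  ultimately show ?thesis
    unfolding Sdual_def by blast
qed

lemma pairing_apply_op_diff_le:
  assumes "\<forall>m\<ge>N. \<forall>n\<ge>N. native_norm L p (\<lambda>k. s m k - s n k) < e" "N \<le> n" "N \<le> m" "\<phi> \<in> Sspace"
  shows "pairing (apply_op L (\<lambda>k. s n k - s m k)) \<phi> \<le> e * sup_norm \<phi>"
proof -
  have "native_norm L p (\<lambda>k. s n k - s m k) < e"
    using assms(1-3) by blast
  then have "Mnorm (apply_op L (\<lambda>k. s n k - s m k)) \<le> e"
    using Mnorm_le_native_norm[OF native_space_diff[OF s s], of n m] by linarith
  then have "Mnorm (apply_op L (\<lambda>k. s n k - s m k)) * sup_norm \<phi> \<le> e * sup_norm \<phi>"
    using sup_norm_nonneg[OF Sspace_rapidly_decaying[OF assms(4)]] by (rule mult_right_mono)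
  then show ?thesis
    using pairing_le_Mnorm[OF native_space_Mset[OF native_space_diff[OF s s, of n m]] assms(4)] by linarith
qed

lemma abs_pairing_apply_op_diff_limit_le:
  assumes "\<forall>m\<ge>M. \<forall>n\<ge>M. native_norm L p (\<lambda>k. s m k - s n k) < \<delta>" "M \<le> m" "rapidly_decaying \<phi>"
  shows "\<bar>pairing (apply_op L (\<lambda>k. s m k - f k)) \<phi>\<bar>
           \<le> \<delta> * infsum (\<lambda>k. cmod (L k * of_real (coeff_weight k) * \<phi> (kneg k))) UNIV"
proof (rule abs_pairing_le_weighted[OF _ assms(3)])
  show "slowly_growing (\<lambda>k. L k * of_real (coeff_weight k))"
    by (intro slowly_growing_mult slowly_growing_L slowly_growing_coeff_weight)
  show "slowly_growing (apply_op L (\<lambda>k. s m k - f k))"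
    unfolding apply_op_def
    by (intro slowly_growing_mult slowly_growing_L Sdual_slowly_growing Sdual_diff
          native_space_Sdual s Cauchy_limit_in_Sdual)
  fix k
  have "cmod (L k) * cmod (s m k - f k) \<le> cmod (L k) * (coeff_weight k * \<delta>)"
    using tail[OF assms(1,2), of k] by (simp add: mult_left_mono)
  then show "cmod (apply_op L (\<lambda>k. s m k - f k) k) \<le> cmod (L k * of_real (coeff_weight k)) * \<delta>"
    using coeff_weight_ge_1[of k] unfolding apply_op_def by (simp add: norm_mult mult.assoc)
qed

text \<open>The bound \<open>\<parallel>L (s\<^sub>n - s\<^sub>m)\<parallel> \<le> e\<close> passes to the limit \<open>m \<rightarrow> \<infinity>\<close> because
  \<open>L (s\<^sub>m - f)\<close> tends to \<open>0\<close> uniformly against the weight \<open>L \<cdot> coeff_weight\<close>.\<close>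

lemma Mnorm_apply_op_tail:
  assumes N: "\<forall>m\<ge>N. \<forall>n\<ge>N. native_norm L p (\<lambda>k. s m k - s n k) < e" and "N \<le> n"
  shows "apply_op L (\<lambda>k. s n k - f k) \<in> Mset" "Mnorm (apply_op L (\<lambda>k. s n k - f k)) \<le> e"
proof -
  have "pairing (apply_op L (\<lambda>k. s n k - f k)) \<phi> \<le> e * sup_norm \<phi>" if \<phi>: "\<phi> \<in> Sspace" for \<phi>
  proof (rule field_le_epsilon)
    fix \<epsilon> :: real assume "0 < \<epsilon>"
    define C where "C = infsum (\<lambda>k. cmod (L k * of_real (coeff_weight k) * \<phi> (kneg k))) UNIV"
    have "0 \<le> C"
      unfolding C_def by (intro infsum_nonneg) simp
    define \<delta> where "\<delta> = \<epsilon> / (C + 1)"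
    have "0 < \<delta>" "\<delta> * C \<le> \<epsilon>"
      using \<open>0 < \<epsilon>\<close> \<open>0 \<le> C\<close> unfolding \<delta>_def by (auto simp: field_simps)
    obtain M where M: "\<forall>m\<ge>M. \<forall>n\<ge>M. native_norm L p (\<lambda>k. s m k - s n k) < \<delta>"
      using cauchy[OF \<open>0 < \<delta>\<close>] by blast
    define m where "m = max M N"
    have "apply_op L (\<lambda>k. s n k - f k)
          = (\<lambda>k. apply_op L (\<lambda>k. s n k - s m k) k + apply_op L (\<lambda>k. s m k - f k) k)"
      unfolding apply_op_def by (simp add: algebra_simps)
    moreover have "slowly_growing (apply_op L (\<lambda>k. s n k - s m k))"
      "slowly_growing (apply_op L (\<lambda>k. s m k - f k))"
      unfolding apply_op_def
      by (intro slowly_growing_mult slowly_growing_L Sdual_slowly_growing Sdual_diff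
            native_space_Sdual s Cauchy_limit_in_Sdual)+
    moreover have "pairing (apply_op L (\<lambda>k. s n k - s m k)) \<phi> \<le> e * sup_norm \<phi>"
      using pairing_apply_op_diff_le[OF N \<open>N \<le> n\<close> _ \<phi>] unfolding m_def by simp
    moreover have "\<bar>pairing (apply_op L (\<lambda>k. s m k - f k)) \<phi>\<bar> \<le> \<delta> * C"
      using abs_pairing_apply_op_diff_limit_le[OF M _ Sspace_rapidly_decaying[OF \<phi>]]
      unfolding m_def C_def by simp
    ultimately show "pairing (apply_op L (\<lambda>k. s n k - f k)) \<phi> \<le> e * sup_norm \<phi> + \<epsilon>"
      using pairing_add_left[OF _ _ Sspace_rapidly_decaying[OF \<phi>]] \<open>\<delta> * C \<le> \<epsilon>\<close> by fastforce
  qed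
  then show "apply_op L (\<lambda>k. s n k - f k) \<in> Mset" "Mnorm (apply_op L (\<lambda>k. s n k - f k)) \<le> e"
    using Mset_intro[OF Sdual_mult[OF L_in_LSI Sdual_diff[OF native_space_Sdual[OF s] Cauchy_limit_in_Sdual]]]
    unfolding apply_op_def by blast+
qed

lemma Cauchy_limit_in_native_space: "f \<in> native_space L"
proof -
  obtain N where N: "\<forall>m\<ge>N. \<forall>n\<ge>N. native_norm L p (\<lambda>k. s m k - s n k) < 1"
    using cauchy[of 1] by auto
  have "apply_op L f = (\<lambda>k. apply_op L (s N) k - apply_op L (\<lambda>k. s N k - f k) k)"
    unfolding apply_op_def by (simp add: algebra_simps)
  then show ?thesis
    using Mset_diff[OF native_space_Mset[OF s] Mnorm_apply_op_tail(1)[OF N order_refl]]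
      Cauchy_limit_in_Sdual unfolding native_space_def by simp
qed

lemma native_norm_tendsto_Cauchy_limit: "(\<lambda>n. native_norm L p (\<lambda>k. s n k - f k)) \<longlonglongrightarrow> 0"
proof (rule LIMSEQ_I)
  fix r :: real assume "0 < r"
  define c where "c = real (card {k. L k = 0})"
  define e where "e = r / (2 * (1 + c))"
  have "0 < 1 + c"
    unfolding c_def by simp
  then have "e * (1 + c) = r / 2"
    unfolding e_def times_divide_eq_left by (intro nonzero_mult_divide_mult_cancel_right) simp
  then have "e + c * e < r"
    using \<open>0 < r\<close> by (simp add: algebra_simps)
  have "0 < e"
    using \<open>0 < r\<close> \<open>0 < 1 + c\<close> unfolding e_def by simp
  then obtain N where N: "\<forall>m\<ge>N. \<forall>n\<ge>N. native_norm L p (\<lambda>k. s m k - s n k) < e"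
    using cauchy by blast
  have "norm (native_norm L p (\<lambda>k. s n k - f k) - 0) < r" if "N \<le> n" for n
  proof -
    have diff: "(\<lambda>k. s n k - f k) \<in> native_space L"
      using native_space_diff[OF s Cauchy_limit_in_native_space] .
    have "cmod (s n k - f k) \<le> e" if "L k = 0" for k
      using tail[OF N \<open>N \<le> n\<close>, of k] that by (simp add: coeff_weight_def pinv_def)
    then have "l2norm (proj_null L (\<lambda>k. s n k - f k)) \<le> c * e"
      using order_trans[OF l2norm_proj_null_le_sum sum_mono[of "{k. L k = 0}" _ "\<lambda>_. e"]]
      unfolding c_def by fastforce
    then have "native_norm L p (\<lambda>k. s n k - f k) \<le> e + c * e"
      using native_norm_bounds(2)[OF diff] Mnorm_apply_op_tail(2)[OF N \<open>N \<le> n\<close>] by linarith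
    then show ?thesis
      using \<open>e + c * e < r\<close> native_norm_nonneg[OF diff] by simp
  qed
  then show "\<exists>N. \<forall>n\<ge>N. norm (native_norm L p (\<lambda>k. s n k - f k) - 0) < r"
    by blast
qed

end

lemma native_space_complete:
  assumes s: "\<And>n. s n \<in> native_space L"
    and cauchy: "\<And>e. 0 < e \<Longrightarrow> \<exists>N. \<forall>m\<ge>N. \<forall>n\<ge>N. native_norm L p (\<lambda>k. s m k - s n k) < e"
  shows "\<exists>f\<in>native_space L. (\<lambda>n. native_norm L p (\<lambda>k. s n k - f k)) \<longlonglongrightarrow> 0"
proof -
  obtain f where "\<And>k. (\<lambda>n. s n k) \<longlonglongrightarrow> f k"
    and "\<And>e N n k. \<forall>m\<ge>N. \<forall>n\<ge>N. native_norm L p (\<lambda>k. s m k - s n k) < e \<Longrightarrow> N \<le> n \<Longrightarrow>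
           cmod (s n k - f k) \<le> coeff_weight k * e"
    using Cauchy_native_coeff_limit[OF s cauchy] by blast
  then show ?thesis
    using Cauchy_limit_in_native_space[OF s cauchy] native_norm_tendsto_Cauchy_limit[OF s cauchy] by blast
qed

lemma banach_native_space: "banach_on (native_space L) (native_norm L p)"
  unfolding banach_on_def
proof (intro conjI ballI allI impI)
  fix s :: "nat \<Rightarrow> _"
  assume "(\<forall>n. s n \<in> native_space L) \<and>
    (\<forall>e>0. \<exists>N. \<forall>m\<ge>N. \<forall>n\<ge>N. native_norm L p (\<lambda>k. s m k - s n k) < e)"
  then show "\<exists>f\<in>native_space L. (\<lambda>n. native_norm L p (\<lambda>k. s n k - f k)) \<longlonglongrightarrow> 0"
    using native_space_complete by blast
qed (simp_all add: native_space_zero native_space_add native_space_scaleR native_norm_nonneg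
       native_norm_eq_0_iff native_norm_scaleR native_norm_triangle)

end

section \<open>Continuity of the embeddings\<close>

lemma norm_coeff_le_Sseminorm:
  assumes "rapidly_decaying \<phi>"
  shows "cmod (\<phi> k) * (1 + kabs k) ^ N \<le> Sseminorm N \<phi>"
proof -
  obtain C where "\<And>k. cmod (\<phi> k) * (1 + kabs k) ^ N \<le> C"
    using rapidly_decaying_boundE[OF assms] by blast
  then show ?thesis
    unfolding Sseminorm_def by (intro cSUP_upper bdd_aboveI2) auto
qed

lemma Sseminorm_nonneg: "rapidly_decaying \<phi> \<Longrightarrow> 0 \<le> Sseminorm N \<phi>"
  using norm_coeff_le_Sseminorm[of \<phi> undefined N] kabs_power_pos[of undefined N]
  by (meson mult_nonneg_nonneg norm_ge_zero order_trans less_imp_le)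

lemma norm_mult_le_Sseminorm:
  fixes \<phi> :: "'d::finite fseq"
  assumes "0 \<le> C" "cmod a \<le> C * (1 + kabs k) ^ M" "rapidly_decaying \<phi>"
  shows "cmod (a * \<phi> k) \<le> C * Sseminorm (M + 2 * CARD('d)) \<phi> * lattice_weight k"
proof -
  define N where "N = M + 2 * CARD('d)"
  have pos: "0 < (1 + kabs k) ^ (2 * CARD('d))" "0 < 1 + kabs k"
    using kabs_power_pos[of k] by (auto simp: add_pos_nonneg)
  have "cmod (a * \<phi> k) \<le> C * (1 + kabs k) ^ M * cmod (\<phi> k)"
    unfolding norm_mult by (intro mult_right_mono assms(2)) simp
  also have "\<dots> = C * (cmod (\<phi> k) * (1 + kabs k) ^ N) / (1 + kabs k) ^ (2 * CARD('d))"
    using pos unfolding N_def by (simp add: power_add field_simps)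
  also have "\<dots> \<le> C * Sseminorm N \<phi> * (1 / (1 + kabs k) ^ (2 * CARD('d)))"
    using pos assms(1) norm_coeff_le_Sseminorm[OF assms(3), of k N]
    by (simp add: divide_right_mono mult_left_mono)
  also have "\<dots> \<le> C * Sseminorm N \<phi> * lattice_weight k"
    using assms(1) Sseminorm_nonneg[OF assms(3)] lattice_weight_ge[of k] by (intro mult_left_mono) auto
  finally show ?thesis
    unfolding N_def .
qed

lemma l1_mult_le_Sseminorm:
  fixes a :: "'d::finite fseq"
  assumes "slowly_growing a"
  shows "\<exists>C N. \<forall>\<phi>. rapidly_decaying \<phi> \<longrightarrow> infsum (\<lambda>k. cmod (a k * \<phi> k)) UNIV \<le> C * Sseminorm N \<phi>"
proof -
  obtain C M where "0 \<le> C" and a: "\<And>k. cmod (a k) \<le> C * (1 + kabs k) ^ M"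
    using slowly_growing_boundE[OF assms] by blast
  define N where "N = M + 2 * CARD('d)"
  define S where "S = infsum (lattice_weight :: ('d \<Rightarrow> int) \<Rightarrow> real) UNIV"
  have "infsum (\<lambda>k. cmod (a k * \<phi> k)) UNIV \<le> C * S * Sseminorm N \<phi>"
    if \<phi>: "rapidly_decaying \<phi>" for \<phi>
  proof -
    have bound: "cmod (a k * \<phi> k) \<le> C * Sseminorm N \<phi> * lattice_weight k" for k
      unfolding N_def by (rule norm_mult_le_Sseminorm[OF \<open>0 \<le> C\<close> a \<phi>])
    have summable: "(\<lambda>k::'d \<Rightarrow> int. C * Sseminorm N \<phi> * lattice_weight k) summable_on UNIV"
      by (intro summable_on_cmult_right summable_on_lattice_weight)
    have "infsum (\<lambda>k. cmod (a k * \<phi> k)) UNIV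
          \<le> infsum (\<lambda>k::'d \<Rightarrow> int. C * Sseminorm N \<phi> * lattice_weight k) UNIV"
    proof (rule infsum_mono[OF _ summable])
      show "(\<lambda>k. cmod (a k * \<phi> k)) summable_on UNIV"
        using bound by (intro summable_on_comparison_test[OF summable]) auto
    qed (rule bound)
    also have "\<dots> = C * Sseminorm N \<phi> * S"
      unfolding S_def by (rule infsum_cmult_right')
    finally show ?thesis
      by (simp add: mult_ac)
  qed
  then show ?thesis
    by blast
qed

context native_norm_exponent
begin

lemma native_norm_le_Sseminorm: "\<exists>C N. \<forall>\<phi>\<in>Sspace. native_norm L p \<phi> \<le> C * Sseminorm N \<phi>"
proof -
  obtain C N where l1: "\<And>\<phi>. rapidly_decaying \<phi> \<Longrightarrow> infsum (\<lambda>k. cmod (L k * \<phi> k)) UNIV \<le> C * Sseminorm N \<phi>"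
    using l1_mult_le_Sseminorm[OF slowly_growing_L] by blast
  define c where "c = real (card {k. L k = 0})"
  have "native_norm L p \<phi> \<le> (C + c) * Sseminorm N \<phi>" if \<phi>: "\<phi> \<in> Sspace" for \<phi>
  proof -
    have "cmod (\<phi> k) \<le> Sseminorm N \<phi>" for k
      using norm_coeff_le_Sseminorm[OF Sspace_rapidly_decaying[OF \<phi>], of k N]
        mult_left_mono[OF one_le_kabs_power[of k N] norm_ge_zero[of "\<phi> k"]] by simp
    then have "l2norm (proj_null L \<phi>) \<le> c * Sseminorm N \<phi>"
      using order_trans[OF l2norm_proj_null_le_sum sum_mono[of "{k. L k = 0}" _ "\<lambda>_. Sseminorm N \<phi>"]]
      unfolding c_def by simp
    moreover have "Mnorm (apply_op L \<phi>) \<le> C * Sseminorm N \<phi>"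
      using Sspace_subset_Mset(2)[OF Sspace_mult[OF L_in_LSI \<phi>]] l1[OF Sspace_rapidly_decaying[OF \<phi>]]
      unfolding apply_op_def by linarith
    ultimately show ?thesis
      using native_norm_bounds(2)[OF subsetD[OF Sspace_subset_native_space \<phi>]] by (simp add: algebra_simps)
  qed
  then show ?thesis
    by blast
qed

lemma abs_pairing_proj_null_le:
  assumes "rapidly_decaying \<phi>"
  shows "\<bar>pairing (proj_null L f) \<phi>\<bar> \<le> l2norm (proj_null L f) * (\<Sum>k\<in>{k. L k = 0}. cmod (\<phi> (kneg k)))"
proof -
  have "\<bar>pairing (proj_null L f) \<phi>\<bar> \<le> infsum (\<lambda>k. cmod (proj_null L f k * \<phi> (kneg k))) UNIV"
    using abs_pairing_le[OF rapidly_decaying_imp_slowly_growing[OF rapidly_decaying_proj_null] assms] .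
  also have "\<dots> = (\<Sum>k\<in>{k. L k = 0}. cmod (f k * \<phi> (kneg k)))"
    using finite_zeros by (subst infsum_cong_neutral[where T="{k. L k = 0}"]) (auto simp: proj_null_def)
  also have "\<dots> \<le> (\<Sum>k\<in>{k. L k = 0}. l2norm (proj_null L f) * cmod (\<phi> (kneg k)))"
    using norm_coeff_le_l2norm_proj_null by (intro sum_mono) (simp add: norm_mult mult_right_mono)
  finally show ?thesis
    by (simp add: sum_distrib_left)
qed

lemma pairing_bounded_by_native_norm:
  assumes \<phi>: "\<phi> \<in> Sspace"
  shows "\<exists>C. \<forall>f\<in>native_space L. \<bar>pairing f \<phi>\<bar> \<le> C * native_norm L p f"
proof -
  define \<psi> where "\<psi> k = pinv L (kneg k) * \<phi> k" for k
  define D where "D = (\<Sum>k\<in>{k. L k = 0}. cmod (\<phi> (kneg k)))"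
  have "(\<lambda>k. pinv L (kneg k)) \<in> LSI"
    using pinv_in_LSI unfolding LSI_def by (auto intro: slowly_growing_kneg hermitian_kneg)
  then have "\<psi> \<in> Sspace"
    unfolding \<psi>_def by (rule Sspace_mult[OF _ \<phi>])
  have "\<bar>pairing f \<phi>\<bar> \<le> (sup_norm \<psi> + D) * native_norm L p f" if f: "f \<in> native_space L" for f
  proof -
    define u where "u = apply_op (pinv L) (apply_op L f)"
    have "slowly_growing u"
      using slowly_growing_mult[OF slowly_growing_pinv Mset_slowly_growing[OF native_space_Mset[OF f]]]
      unfolding u_def apply_op_def[of "pinv L"] .
    moreover have "slowly_growing (proj_null L f)"
      by (rule rapidly_decaying_imp_slowly_growing[OF rapidly_decaying_proj_null])
    ultimately have "pairing f \<phi> = pairing u \<phi> + pairing (proj_null L f) \<phi>"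
      using pairing_add_left[OF _ _ Sspace_rapidly_decaying[OF \<phi>]] pinv_apply_plus_proj[of f]
      unfolding u_def by metis
    moreover have "\<bar>pairing u \<phi>\<bar> \<le> native_norm L p f * sup_norm \<psi>"
    proof -
      have "pairing u \<phi> = pairing (apply_op L f) \<psi>"
        unfolding u_def \<psi>_def apply_op_def by (rule pairing_mult_transpose)
      then show ?thesis
        using abs_pairing_le_Mnorm[OF native_space_Mset[OF f] \<open>\<psi> \<in> Sspace\<close>] Mnorm_le_native_norm[OF f]
          sup_norm_nonneg[OF Sspace_rapidly_decaying[OF \<open>\<psi> \<in> Sspace\<close>]]
        by (metis mult_right_mono order_trans)
    qed
    moreover have "\<bar>pairing (proj_null L f) \<phi>\<bar> \<le> native_norm L p f * D"
      using abs_pairing_proj_null_le[OF Sspace_rapidly_decaying[OF \<phi>], of f] l2norm_le_native_norm[OF f]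
      unfolding D_def by (meson mult_right_mono order_trans sum_nonneg norm_ge_zero)
    ultimately show ?thesis
      by (simp add: algebra_simps)
  qed
  then show ?thesis
    by blast
qed

end

theorem mainTheorem3:
  fixes L :: "'d::finite fseq" and p :: ereal
  assumes "spline_admissible L" and "1 \<le> p"
  shows "native_space L =
           {(\<lambda>k. apply_op (pinv L) w k + n k) |w n. w \<in> Mset \<and> n \<in> null_space L}
       \<and> {apply_op (pinv L) w |w. w \<in> Mset} \<inter> null_space L = {(\<lambda>k. 0)}
       \<and> banach_on (native_space L) (native_norm L p)
       \<and> (\<forall>q. 1 \<le> q \<longrightarrow> (\<exists>C1>0. \<exists>C2>0. \<forall>f\<in>native_space L.
              C1 * native_norm L p f \<le> native_norm L q f \<and>
              native_norm L q f \<le> C2 * native_norm L p f))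
       \<and> Sspace \<subseteq> native_space L \<and> native_space L \<subseteq> Sdual
       \<and> (\<exists>C N. \<forall>\<phi>\<in>Sspace. native_norm L p \<phi> \<le> C * Sseminorm N \<phi>)
       \<and> (\<forall>\<phi>\<in>Sspace. \<exists>C. \<forall>f\<in>native_space L. \<bar>pairing f \<phi>\<bar> \<le> C * native_norm L p f)
       \<and> (\<exists>C. \<forall>f\<in>native_space L. Mnorm (apply_op L f) \<le> C * native_norm L p f)
       \<and> (\<forall>f. is_periodic_spline L f \<longrightarrow> f \<in> native_space L)"
proof -
  interpret native_norm_exponent L p
    using assms by unfold_locales
  have "\<exists>C. \<forall>f\<in>native_space L. Mnorm (apply_op L f) \<le> C * native_norm L p f"
    using Mnorm_le_native_norm by (intro exI[of _ 1]) simp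
  moreover have "native_space L \<subseteq> Sdual"
    using native_space_Sdual by blast
  ultimately show ?thesis
    using native_space_decomposition range_pinv_inter_null_space banach_native_space
      native_norms_equivalent Sspace_subset_native_space native_norm_le_Sseminorm
      pairing_bounded_by_native_norm periodic_spline_in_native_space
    by blast
qed

end
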